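(* Let $(u_{h,\tau},v_{h,\tau})\in\mathring{\mathcal V}_{h,\tau}^{p,q}\times\mathring{\mathcal V}_{h,\tau}^{p,q}$ solve $$(c^2\nabla v_{h,\tau},\nabla z)_{Q_T}-(c^2\nabla\partial_t u_{h,\tau},\nabla z)_{Q_T}=0,\qquad(\partial_t v_{h,\tau},w)_{Q_T}+(c^2\nabla u_{h,\tau},\nabla w)_{Q_T}=(f,w)_{Q_T}$$ for all $z,w\in\mathring{\mathcal W}_{h,\tau}^{p,q-1}$, with prescribed initial values $u_{h,\tau}(\cdot,0)=u_{0,h}\in\mathring{\mathcal V}_h^p$, $v_{h,\tau}(\cdot,0)=v_{0,h}\in\mathring{\mathcal V}_h^p$, and let $u^\star_{h,\tau}(\cdot,t)=u_{h,\tau}(\cdot,0)+\int_0^t v_{h,\tau}(\cdot,s)\,ds$, so that $u^\star_{h,\tau}\in\mathring{\mathcal V}_{h,\tau}^{p,q+1}$. Then, for $n=1,\dots,N$: (i) if $q>1$, $(u^\star_{h,\tau}-u_{h,\tau},w_{h,\tau})_{Q_n}=0$ for all $w_{h,\tau}\in\mathbb P^{q-2}(I_n)\otimes\mathring{\mathcal V}_h^p$; (ii) $\|u^\star_{h,\tau}-u_{h,\tau}\|_{L^\infty(I_n;L^2(\Omega))}\le\sqrt{C_{q,\star}\tau_n}\,\|(\mathrm{Id}-\Pi_{q-1}^t)v_{h,\tau}\|_{L^2(Q_n)}$; (iii) $\|u^\star_{h,\tau}-u_{h,\tau}\|_{L^1(I_n;L^2(\Omega))}\le\tau_n\|(\mathrm{Id}-\Pi_{q-1}^t)v_{h,\tau}\|_{L^1(I_n;L^2(\Omega))}$,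 where $C_{q,\star}=1/\pi$ if $q=1$ and $C_{q,\star}=\frac{1}{2\sqrt{(q-1)q}}$ if $q>1$.
   Context: Let $\Omega\subset\mathbb R^d$, $d\in\{1,2,3\}$, be a polytopic domain, $T>0$, $Q_T=\Omega\times(0,T)$, $c\in C^0(\overline\Omega)$ with $0<c_\star<c(x)<c^\star$, and $f\in L^1(0,T;L^2(\Omega))$ (homogeneous Dirichlet boundary conditions). Let $\mathcal T_h$ be a shape-regular conforming simplicial mesh of $\Omega$ and $0=t_0<\dots<t_N=T$ a partition with $I_n=(t_{n-1},t_n)$, $\tau_n=t_n-t_{n-1}$, $Q_n=\Omega\times I_n$. Fix integers $p,q\ge1$. $\mathcal V_h^p=\{v\in H^1(\Omega):v|_K\in\mathbb P^p(K)\ \forall K\}$, $\mathring{\mathcal V}_h^p=\mathcal V_h^p\cap H^1_0(\Omega)$, $\mathring{\mathcal V}_{h,\tau}^{p,k}=\{v\in C^0([0,T];H^1_0(\Omega)):v|_{Q_n}\in\mathbb P^k(I_n)\otimes\mathring{\mathcal V}_h^p\}$, $\mathring{\mathcal W}_{h,\tau}^{p,q-1}=\{w\in L^2(0,T;H^1_0(\Omega)):w|_{Q_n}\in\mathbb P^{q-1}(I_n)\otimes\mathring{\mathcal V}_h^p\}$ ($\otimes$ = span of products); $(\cdot,\cdot)_D$ is the $L^2(D)$ inner product. $\Pi_{q-1}^t$ is the $L^2(0,T)$-orthogonal projection onto (possibly discontinuous) piecewise polynomials of degree $\le q-1$ on the partition, applied pointwise in space. *)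

theory Defs
  imports "HOL-Analysis.Analysis" "HOL-Computational_Algebra.Polynomial"
          "HOL-Probability.Essential_Supremum"
begin

definition poly_fun_le :: "nat \<Rightarrow> ('a::euclidean_space \<Rightarrow> real) \<Rightarrow> bool" where
  "poly_fun_le p P \<longleftrightarrow>
     (\<exists>(A :: ('a \<Rightarrow> nat) set) (c :: ('a \<Rightarrow> nat) \<Rightarrow> real).
        finite A \<and> (\<forall>\<alpha>\<in>A. (\<Sum>i\<in>Basis. \<alpha> i) \<le> p) \<and>
        P = (\<lambda>x. \<Sum>\<alpha>\<in>A. c \<alpha> * (\<Prod>i\<in>Basis. (x \<bullet> i) ^ (\<alpha> i))))"

definition conforming_simplicial_mesh :: "'a::euclidean_space set \<Rightarrow> 'a set set \<Rightarrow> bool" where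
  "conforming_simplicial_mesh \<Omega> Th \<longleftrightarrow>
     finite Th \<and> (\<forall>K\<in>Th. (int DIM('a)) simplex K) \<and> \<Union>Th = closure \<Omega> \<and>
     (\<forall>K\<in>Th. \<forall>K'\<in>Th. (K \<inter> K') face_of K \<and> (K \<inter> K') face_of K')"

definition polytopic_domain :: "'a::euclidean_space set \<Rightarrow> bool" where
  "polytopic_domain \<Omega> \<longleftrightarrow> open \<Omega> \<and> connected \<Omega> \<and> \<Omega> \<noteq> {} \<and> bounded \<Omega> \<and>
     (\<exists>Th. finite Th \<and> (\<forall>K\<in>Th. polytope K) \<and> \<Union>Th = closure \<Omega>)"

(* \<ring>V_h^p = V_h^p \<inter> H^1_0, functions represented as extended by zero outside Omega *)
definition Vh0 :: "'a::euclidean_space set \<Rightarrow> 'a set set \<Rightarrow> nat \<Rightarrow> ('a \<Rightarrow> real) set" where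
  "Vh0 \<Omega> Th p = {v. continuous_on UNIV v \<and> (\<forall>x. x \<notin> \<Omega> \<longrightarrow> v x = 0) \<and>
                      (\<forall>K\<in>Th. \<exists>P. poly_fun_le p P \<and> (\<forall>x\<in>K. v x = P x))}"

definition time_partition :: "(nat \<Rightarrow> real) \<Rightarrow> nat \<Rightarrow> real \<Rightarrow> bool" where
  "time_partition tn N T \<longleftrightarrow> N \<ge> 1 \<and> tn 0 = 0 \<and> tn N = T \<and> (\<forall>n<N. tn n < tn (Suc n))"

(* \<ring>V_{h,tau}^{p,k}: continuous in time, on each closed [t_{n-1},t_n] in P^k(I_n) \<otimes> \<ring>V_h^p *)
definition Vht :: "'a::euclidean_space set \<Rightarrow> 'a set set \<Rightarrow> nat \<Rightarrow> (nat \<Rightarrow> real) \<Rightarrow> nat \<Rightarrow> nat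
                     \<Rightarrow> ('a \<Rightarrow> real \<Rightarrow> real) set" where
  "Vht \<Omega> Th p tn N k = {u. \<forall>n\<in>{1..N}. \<exists>\<phi>. (\<forall>j\<le>k. \<phi> j \<in> Vh0 \<Omega> Th p) \<and>
        (\<forall>t\<in>{tn (n-1)..tn n}. \<forall>x. u x t = (\<Sum>j\<le>k. t ^ j * \<phi> j x))}"

(* \<ring>W_{h,tau}^{p,k}: on each open I_n in P^k(I_n) \<otimes> \<ring>V_h^p (discontinuous in time) *)
definition Wht :: "'a::euclidean_space set \<Rightarrow> 'a set set \<Rightarrow> nat \<Rightarrow> (nat \<Rightarrow> real) \<Rightarrow> nat \<Rightarrow> nat
                     \<Rightarrow> ('a \<Rightarrow> real \<Rightarrow> real) set" where
  "Wht \<Omega> Th p tn N k = {w. \<forall>n\<in>{1..N}. \<exists>\<phi>. (\<forall>j\<le>k. \<phi> j \<in> Vh0 \<Omega> Th p) \<and>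
        (\<forall>t\<in>{tn (n-1)<..<tn n}. \<forall>x. w x t = (\<Sum>j\<le>k. t ^ j * \<phi> j x))}"

definition grad :: "('a::euclidean_space \<Rightarrow> real) \<Rightarrow> 'a \<Rightarrow> 'a" where
  "grad g x = (\<Sum>i\<in>Basis. frechet_derivative g (at x) i *\<^sub>R i)"

definition dt :: "('a \<Rightarrow> real \<Rightarrow> real) \<Rightarrow> 'a \<Rightarrow> real \<Rightarrow> real" where
  "dt u x t = deriv (\<lambda>r. u x r) t"

definition QInt :: "'a::euclidean_space set \<Rightarrow> real \<Rightarrow> real \<Rightarrow> ('a \<Rightarrow> real \<Rightarrow> real) \<Rightarrow> real" where
  "QInt \<Omega> a b g = (LINT t:{a<..<b}|lborel. (LINT x:\<Omega>|lborel. g x t))"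

definition L2nrm :: "'a::euclidean_space set \<Rightarrow> ('a \<Rightarrow> real) \<Rightarrow> real" where
  "L2nrm \<Omega> g = sqrt (LINT x:\<Omega>|lborel. (g x)\<^sup>2)"

definition L1L2 :: "'a::euclidean_space set \<Rightarrow> real \<Rightarrow> ('a \<Rightarrow> real \<Rightarrow> real) \<Rightarrow> bool" where
  "L1L2 \<Omega> T f \<longleftrightarrow> case_prod f \<in> borel_measurable (lborel \<Otimes>\<^sub>M lborel) \<and>
     (AE t in lborel. t \<in> {0<..<T} \<longrightarrow> set_integrable lborel \<Omega> (\<lambda>x. (f x t)\<^sup>2)) \<and>
     set_integrable lborel {0<..<T} (\<lambda>t. L2nrm \<Omega> (\<lambda>x. f x t))"

definition tproj :: "nat \<Rightarrow> real \<Rightarrow> real \<Rightarrow> (real \<Rightarrow> real) \<Rightarrow> real \<Rightarrow> real" where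
  "tproj k a b g = poly (THE P. degree P \<le> k \<and>
       (\<forall>j\<le>k. (LINT r:{a<..<b}|lborel. (g r - poly P r) * r ^ j) = 0))"

definition Cqstar :: "nat \<Rightarrow> real" where
  "Cqstar q = (if q = 1 then 1 / pi else 1 / (2 * sqrt (real (q - 1) * real q)))"

end

theory Submission
  imports Defs
begin

(* On each subinterval I_n = (a, b) write u = U(x, t) and v = V(x, t) as polynomials of degree q
   in t.  Testing the first equation with t^j m, localized to I_n, shows that the j-th time moment
   of the defect E = V - dU/dt has vanishing stiffness against itself for every j < q, so it is
   zero: E(x, .) is orthogonal to all polynomials of degree < q on I_n and therefore
   E(x, t) = psi(x) L(t) for one Legendre polynomial L of degree q.  Consequently
   v - Pi_{q-1} v = E on I_n, and since E has mean zero on every subinterval,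
   u* - u = psi(x) Lambda(t) with Lambda(t) = int_a^t L, which vanishes at a and b.
   All three claims are one-dimensional facts about Lambda: it is orthogonal to degree q - 2 by
   parts; |Lambda| <= int |L|; and Lambda = -(t - a)(b - t) L' / (q (q + 1)), where the energy
   q (q + 1) L^2 + (t - a)(b - t) L'^2 is largest at the endpoints, which bounds Lambda^2 by
   (2q + 1) / (4 q (q + 1)) (b - a) int L^2; for q = 1, where Lambda is an explicit quadratic,
   the constant is 3/16. *)

section \<open>Borel measurability of the gradient\<close>

text \<open>The Frechet derivative is defined by a choice operator, so its measurability is not
  automatic. Difference quotients along the sequence \<open>1/(k+1)\<close> give an everywhere defined,
  Borel-measurable candidate that agrees with it at points of differentiability, and the set of
  such points is described by countably many conditions.\<close>

definition diff_quot_limsup :: "('a::euclidean_space \<Rightarrow> real) \<Rightarrow> 'a \<Rightarrow> 'a \<Rightarrow> real" where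
  "diff_quot_limsup f x b =
     real_of_ereal (limsup (\<lambda>k. ereal ((f (x + (1 / real (Suc k)) *\<^sub>R b) - f x) * real (Suc k))))"

definition diff_quot_linear :: "('a::euclidean_space \<Rightarrow> real) \<Rightarrow> 'a \<Rightarrow> 'a \<Rightarrow> real" where
  "diff_quot_linear f x h = (\<Sum>b\<in>Basis. (h \<bullet> b) * diff_quot_limsup f x b)"

lemma borel_measurable_diff_quot_linear:
  fixes f :: "'a::euclidean_space \<Rightarrow> real"
  assumes "continuous_on UNIV f" and "h \<in> borel_measurable borel"
  shows "(\<lambda>x. diff_quot_linear f x (h x)) \<in> borel_measurable borel"
proof -
  have [measurable]: "f \<in> borel_measurable borel" "h \<in> borel_measurable borel"
    using assms by (simp_all add: borel_measurable_continuous_onI)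
  show ?thesis unfolding diff_quot_linear_def diff_quot_limsup_def by measurable
qed

lemma diff_quot_limsup_eq:
  fixes f :: "'a::euclidean_space \<Rightarrow> real"
  assumes "(f has_derivative F) (at x)"
  shows "diff_quot_limsup f x b = F b"
proof -
  let ?g = "\<lambda>s::real. f (x + s *\<^sub>R b)"
  have "((\<lambda>s. x + s *\<^sub>R b) has_derivative (\<lambda>s. s *\<^sub>R b)) (at 0)"
    by (auto intro!: derivative_eq_intros)
  then have "(?g has_derivative (\<lambda>s. F (s *\<^sub>R b))) (at 0)"
    using diff_chain_at[of "\<lambda>s. x + s *\<^sub>R b" _ 0 f F] assms by (simp add: o_def)
  moreover have "F (s *\<^sub>R b) = s * F b" for s
    using assms has_derivative_bounded_linear linear_scale bounded_linear.linear by fastforce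
  ultimately have "(?g has_field_derivative F b) (at 0)"
    by (simp add: has_field_derivative_def mult.commute[of _ "F b"])
  then have lim: "((\<lambda>s. (?g s - ?g 0) / (s - 0)) \<longlongrightarrow> F b) (at 0)"
    unfolding has_field_derivative_iff by simp
  have "(\<lambda>k. 1 / real (Suc k)) \<longlonglongrightarrow> 0"
    using LIMSEQ_Suc[OF lim_const_over_n[of 1]] by simp
  then have "filterlim (\<lambda>k. 1 / real (Suc k)) (at 0) sequentially"
    by (simp add: filterlim_at)
  from filterlim_compose[OF lim this]
  have "((\<lambda>k. (f (x + (1 / real (Suc k)) *\<^sub>R b) - f x) * real (Suc k)) \<longlongrightarrow> F b) sequentially"
    by (simp add: o_def)
  then have "((\<lambda>k. ereal ((f (x + (1 / real (Suc k)) *\<^sub>R b) - f x) * real (Suc k)))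
      \<longlongrightarrow> ereal (F b)) sequentially"
    by (rule tendsto_ereal)
  then have "limsup (\<lambda>k. ereal ((f (x + (1 / real (Suc k)) *\<^sub>R b) - f x) * real (Suc k)))
      = ereal (F b)"
    by (intro lim_imp_Limsup) simp_all
  then show ?thesis unfolding diff_quot_limsup_def by simp
qed

lemma diff_quot_linear_eq:
  fixes f :: "'a::euclidean_space \<Rightarrow> real"
  assumes "(f has_derivative F) (at x)"
  shows "diff_quot_linear f x = F"
proof
  fix h
  have "F h = (\<Sum>b\<in>Basis. (h \<bullet> b) * F b)"
    using Linear_Algebra.linear_componentwise[OF has_derivative_linear[OF assms], of h 1] by simp
  then show "diff_quot_linear f x h = F h"
    unfolding diff_quot_linear_def using diff_quot_limsup_eq[OF assms] by simp
qed

lemma bounded_linear_diff_quot_linear: "bounded_linear (diff_quot_linear f x)"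
  unfolding diff_quot_linear_def by (auto intro!: bounded_linear_intros)

lemma frechet_derivative_not_differentiable:
  assumes "\<not> f differentiable (at x)"
  shows "frechet_derivative f (at x) = (SOME f'. False)"
proof -
  have "(\<lambda>f'. (f has_derivative f') (at x)) = (\<lambda>f'. False)"
    using assms by (auto simp: differentiable_def)
  then show ?thesis unfolding frechet_derivative_def by metis
qed

lemma has_derivative_at_if_dense_rat:
  fixes f :: "'a::euclidean_space \<Rightarrow> real" and C :: "'a set"
  assumes cont: "continuous_on UNIV f" and F: "bounded_linear F"
    and dense: "\<And>X. open X \<Longrightarrow> X \<noteq> {} \<Longrightarrow> \<exists>d\<in>C. d \<in> X"
    and H: "\<forall>r::rat. r > 0 \<longrightarrow> (\<exists>s::rat. s > 0 \<and> (\<forall>y\<in>C. norm (y - x) < of_rat s \<longrightarrow>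
        \<bar>f y - f x - F (y - x)\<bar> \<le> of_rat r * norm (y - x)))"
  shows "(f has_derivative F) (at x)"
  unfolding has_derivative_at_alt
proof (intro conjI F allI impI)
  fix e :: real assume "e > 0"
  obtain e' where "e' \<in> \<rat>" "0 < e'" "e' < e" using Rats_dense_in_real[OF \<open>e > 0\<close>] by blast
  then obtain r :: rat where r: "0 < r" "of_rat r < e" by (auto simp: Rats_def)
  with H obtain s :: rat where s: "s > 0" "\<forall>y\<in>C. norm (y - x) < of_rat s \<longrightarrow>
      \<bar>f y - f x - F (y - x)\<bar> \<le> of_rat r * norm (y - x)" by auto
  let ?B = "ball x (of_rat s)"
  let ?Z = "{y. \<bar>f y - f x - F (y - x)\<bar> \<le> of_rat r * norm (y - x)}"
  have "closed ?Z"
    using cont bounded_linear.continuous_on[OF F continuous_on_diff[OF continuous_on_id continuous_on_const]]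
    by (intro closed_Collect_le continuous_intros) auto
  moreover have "C \<inter> ?B \<subseteq> ?Z" using s by (auto simp: dist_norm norm_minus_commute)
  moreover have "?B \<subseteq> closure (C \<inter> ?B)"
  proof
    fix y assume y: "y \<in> ?B"
    show "y \<in> closure (C \<inter> ?B)"
      unfolding closure_approachable
    proof (intro allI impI)
      fix \<epsilon> :: real assume "\<epsilon> > 0"
      have "open (?B \<inter> ball y \<epsilon>)" "y \<in> ?B \<inter> ball y \<epsilon>" using y \<open>\<epsilon> > 0\<close> by auto
      then obtain d where "d \<in> C" "d \<in> ?B \<inter> ball y \<epsilon>" using dense by blast
      then show "\<exists>d\<in>C \<inter> ?B. dist d y < \<epsilon>" by (auto simp: dist_commute)
    qed
  qed
  ultimately have "?B \<subseteq> ?Z" by (meson closure_minimal order_trans)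
  have "norm (f y - f x - F (y - x)) \<le> e * norm (y - x)" if "norm (y - x) < of_rat s" for y
  proof -
    have "y \<in> ?Z" using \<open>?B \<subseteq> ?Z\<close> that by (auto simp: dist_norm norm_minus_commute)
    then have "norm (f y - f x - F (y - x)) \<le> of_rat r * norm (y - x)" by simp
    also have "\<dots> \<le> e * norm (y - x)" using r by (simp add: mult_right_mono)
    finally show ?thesis .
  qed
  then show "\<exists>d>0. \<forall>y. norm (y - x) < d \<longrightarrow> norm (f y - f x - F (y - x)) \<le> e * norm (y - x)"
    using s(1) by (intro exI[of _ "of_rat s"]) auto
qed

lemma differentiable_at_iff_dense_rat:
  fixes f :: "'a::euclidean_space \<Rightarrow> real" and C :: "'a set"
  assumes cont: "continuous_on UNIV f"
    and dense: "\<And>X. open X \<Longrightarrow> X \<noteq> {} \<Longrightarrow> \<exists>d\<in>C. d \<in> X"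
  shows "f differentiable (at x) \<longleftrightarrow>
    (\<forall>r::rat. r > 0 \<longrightarrow> (\<exists>s::rat. s > 0 \<and> (\<forall>y\<in>C. norm (y - x) < of_rat s \<longrightarrow>
        \<bar>f y - f x - diff_quot_linear f x (y - x)\<bar> \<le> of_rat r * norm (y - x))))"
proof
  assume "f differentiable (at x)"
  then obtain F where F: "(f has_derivative F) (at x)" by (auto simp: differentiable_def)
  show "\<forall>r::rat. r > 0 \<longrightarrow> (\<exists>s::rat. s > 0 \<and> (\<forall>y\<in>C. norm (y - x) < of_rat s \<longrightarrow>
        \<bar>f y - f x - diff_quot_linear f x (y - x)\<bar> \<le> of_rat r * norm (y - x)))"
  proof (intro allI impI)
    fix r :: rat assume "r > 0"
    then obtain d where d: "d > 0"
      "\<forall>y. norm (y - x) < d \<longrightarrow> norm (f y - f x - F (y - x)) \<le> of_rat r * norm (y - x)"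
      using F unfolding has_derivative_at_alt by (meson zero_less_of_rat_iff)
    obtain s' where "s' \<in> \<rat>" "0 < s'" "s' < d" using Rats_dense_in_real[OF d(1)] by blast
    then obtain s :: rat where "0 < s" "of_rat s < d" by (auto simp: Rats_def)
    then show "\<exists>s::rat. s > 0 \<and> (\<forall>y\<in>C. norm (y - x) < of_rat s \<longrightarrow>
        \<bar>f y - f x - diff_quot_linear f x (y - x)\<bar> \<le> of_rat r * norm (y - x))"
      using d diff_quot_linear_eq[OF F] by (intro exI[of _ s]) auto
  qed
qed (use has_derivative_at_if_dense_rat[OF cont bounded_linear_diff_quot_linear[of f x] dense] in
      \<open>auto simp: differentiable_def\<close>)

lemma borel_measurable_frechet_derivative:
  fixes f :: "'a::euclidean_space \<Rightarrow> real"
  assumes cont: "continuous_on UNIV f"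
  shows "(\<lambda>x. frechet_derivative f (at x) b) \<in> borel_measurable borel"
proof -
  obtain C :: "'a set" where C: "countable C" "\<And>X. open X \<Longrightarrow> X \<noteq> {} \<Longrightarrow> \<exists>d\<in>C. d \<in> X"
    by (rule countable_dense_setE) blast
  have "C \<noteq> {}" using C(2)[of UNIV] by auto
  define cn where "cn = from_nat_into C"
  have C_eq: "C = range cn" using range_from_nat_into[OF \<open>C \<noteq> {}\<close> C(1)] cn_def by simp
  define D where "D x = (\<forall>r::rat. r > 0 \<longrightarrow> (\<exists>s::rat. s > 0 \<and> (\<forall>n::nat.
      norm (cn n - x) < of_rat s \<longrightarrow>
      \<bar>f (cn n) - f x - diff_quot_linear f x (cn n - x)\<bar> \<le> of_rat r * norm (cn n - x))))" for x
  have D_iff: "f differentiable (at x) \<longleftrightarrow> D x" for x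
    using differentiable_at_iff_dense_rat[OF cont C(2), of x] unfolding D_def C_eq by auto
  have [measurable]: "f \<in> borel_measurable borel"
    using cont by (simp add: borel_measurable_continuous_onI)
  have [measurable]: "(\<lambda>x. diff_quot_linear f x (cn n - x)) \<in> borel_measurable borel"
    "(\<lambda>x. diff_quot_linear f x b) \<in> borel_measurable borel" for n
    by (rule borel_measurable_diff_quot_linear[OF cont], measurable)+
  have [measurable]: "Measurable.pred borel D" unfolding D_def by measurable
  have eq: "frechet_derivative f (at x) b =
      (if D x then diff_quot_linear f x b else (SOME f'. False) b)" for x
  proof (cases "D x")
    case True
    then have "(f has_derivative frechet_derivative f (at x)) (at x)"
      using D_iff frechet_derivative_works by blast
    then show ?thesis using True diff_quot_linear_eq by metis
  next
    case False
    then show ?thesis using D_iff frechet_derivative_not_differentiable by metis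
  qed
  show ?thesis unfolding eq by measurable
qed

lemma borel_measurable_grad:
  fixes f :: "'a::euclidean_space \<Rightarrow> real"
  assumes "continuous_on UNIV f"
  shows "grad f \<in> borel_measurable borel"
proof -
  have [measurable]: "(\<lambda>x. frechet_derivative f (at x) b) \<in> borel_measurable borel" for b
    using borel_measurable_frechet_derivative[OF assms] .
  show ?thesis unfolding grad_def[abs_def] by measurable
qed

section \<open>The finite element space\<close>

definition monomial_fun :: "('a::euclidean_space \<Rightarrow> nat) \<Rightarrow> 'a \<Rightarrow> real" where
  "monomial_fun \<alpha> x = (\<Prod>i\<in>Basis. (x \<bullet> i) ^ \<alpha> i)"

lemma poly_fun_le_iff:
  "poly_fun_le p P \<longleftrightarrow> (\<exists>A c. finite A \<and> (\<forall>\<alpha>\<in>A. (\<Sum>i\<in>Basis. \<alpha> i) \<le> p) \<and>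
     P = (\<lambda>x. \<Sum>\<alpha>\<in>A. c \<alpha> * monomial_fun \<alpha> x))"
  unfolding poly_fun_le_def monomial_fun_def by simp

lemma poly_fun_le_continuous_derivative:
  fixes P :: "'a::euclidean_space \<Rightarrow> real"
  assumes "poly_fun_le p P"
  obtains D where "\<And>x. (P has_derivative D x) (at x)" "\<And>h. continuous_on UNIV (\<lambda>x. D x h)"
proof -
  obtain A c where A: "finite A" "P = (\<lambda>x. \<Sum>\<alpha>\<in>A. c \<alpha> * monomial_fun \<alpha> x)"
    using assms unfolding poly_fun_le_iff by blast
  define D where "D x h = (\<Sum>\<alpha>\<in>A. c \<alpha> * (\<Sum>i\<in>Basis. (of_nat (\<alpha> i) * (h \<bullet> i) *
      (x \<bullet> i) ^ (\<alpha> i - 1)) * (\<Prod>j\<in>Basis - {i}. (x \<bullet> j) ^ \<alpha> j)))" for x h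
  have "(P has_derivative D x) (at x)" for x
    unfolding A(2) D_def monomial_fun_def
    by (intro has_derivative_sum has_derivative_mult_right has_derivative_prod)
       (auto intro!: derivative_eq_intros)
  moreover have "continuous_on UNIV (\<lambda>x. D x h)" for h
    unfolding D_def by (intro continuous_intros)
  ultimately show ?thesis by (rule that)
qed

lemma poly_fun_le_differentiable:
  "poly_fun_le p P \<Longrightarrow> P differentiable (at x)"
  using poly_fun_le_continuous_derivative unfolding differentiable_def by blast

lemma continuous_on_grad_poly_fun_le:
  fixes P :: "'a::euclidean_space \<Rightarrow> real"
  assumes "poly_fun_le p P"
  shows "continuous_on UNIV (grad P)"
proof -
  obtain D where D: "\<And>x. (P has_derivative D x) (at x)" "\<And>h. continuous_on UNIV (\<lambda>x. D x h)"
    using poly_fun_le_continuous_derivative[OF assms] by blast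
  have "grad P = (\<lambda>x. \<Sum>i\<in>Basis. D x i *\<^sub>R i)"
    unfolding grad_def[abs_def] using D(1) frechet_derivative_at by metis
  then show ?thesis using D(2) by (auto intro!: continuous_intros)
qed

lemma poly_fun_le_0: "poly_fun_le p (\<lambda>x. 0)"
  unfolding poly_fun_le_iff by (rule exI[of _ "{}"]) auto

lemma poly_fun_le_cmult: "poly_fun_le p P \<Longrightarrow> poly_fun_le p (\<lambda>x. r * P x)"
  unfolding poly_fun_le_iff
  by (auto simp: sum_distrib_left mult.assoc intro!: exI[of _ "\<lambda>\<alpha>. r * _ \<alpha>"])

lemma poly_fun_le_add:
  assumes "poly_fun_le p P" "poly_fun_le p Q"
  shows "poly_fun_le p (\<lambda>x. P x + Q x)"
proof -
  obtain A c where A: "finite A" "\<forall>\<alpha>\<in>A. (\<Sum>i\<in>Basis. \<alpha> i) \<le> p"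
    "P = (\<lambda>x. \<Sum>\<alpha>\<in>A. c \<alpha> * monomial_fun \<alpha> x)"
    using assms(1) unfolding poly_fun_le_iff by blast
  obtain B d where B: "finite B" "\<forall>\<alpha>\<in>B. (\<Sum>i\<in>Basis. \<alpha> i) \<le> p"
    "Q = (\<lambda>x. \<Sum>\<alpha>\<in>B. d \<alpha> * monomial_fun \<alpha> x)"
    using assms(2) unfolding poly_fun_le_iff by blast
  define c' where "c' \<alpha> = (if \<alpha> \<in> A then c \<alpha> else 0)" for \<alpha>
  define d' where "d' \<alpha> = (if \<alpha> \<in> B then d \<alpha> else 0)" for \<alpha>
  have "(\<Sum>\<alpha>\<in>A \<union> B. c' \<alpha> * monomial_fun \<alpha> x) = (\<Sum>\<alpha>\<in>A. c \<alpha> * monomial_fun \<alpha> x)"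
    "(\<Sum>\<alpha>\<in>A \<union> B. d' \<alpha> * monomial_fun \<alpha> x) = (\<Sum>\<alpha>\<in>B. d \<alpha> * monomial_fun \<alpha> x)" for x
    unfolding c'_def d'_def by (rule sum.mono_neutral_cong_right; use A B in auto)+
  then show ?thesis unfolding poly_fun_le_iff using A B
    by (intro exI[of _ "A \<union> B"] exI[of _ "\<lambda>\<alpha>. c' \<alpha> + d' \<alpha>"])
       (auto simp: distrib_right sum.distrib)
qed

lemma poly_fun_le_sum:
  "finite I \<Longrightarrow> (\<And>k. k \<in> I \<Longrightarrow> poly_fun_le p (P k)) \<Longrightarrow>
    poly_fun_le p (\<lambda>x. \<Sum>k\<in>I. a k * P k x)"
  by (induction I rule: finite_induct) (simp_all add: poly_fun_le_0 poly_fun_le_add poly_fun_le_cmult)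

lemma Vh0_continuous: "f \<in> Vh0 \<Omega> Th p \<Longrightarrow> continuous_on UNIV f"
  unfolding Vh0_def by simp

lemma Vh0_sum:
  assumes "finite I" "\<And>k. k \<in> I \<Longrightarrow> f k \<in> Vh0 \<Omega> Th p"
  shows "(\<lambda>x. \<Sum>k\<in>I. a k * f k x) \<in> Vh0 \<Omega> Th p"
proof -
  have "\<exists>P. poly_fun_le p P \<and> (\<forall>x\<in>K. (\<Sum>k\<in>I. a k * f k x) = P x)" if "K \<in> Th" for K
  proof -
    have "\<forall>k\<in>I. \<exists>P. poly_fun_le p P \<and> (\<forall>x\<in>K. f k x = P x)"
      using assms that by (auto simp: Vh0_def)
    then obtain P where "\<forall>k\<in>I. poly_fun_le p (P k) \<and> (\<forall>x\<in>K. f k x = P k x)" by metis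
    then show ?thesis
      using assms(1) by (intro exI[of _ "\<lambda>x. \<Sum>k\<in>I. a k * P k x"]) (auto intro: poly_fun_le_sum)
  qed
  moreover have "continuous_on UNIV (\<lambda>x. \<Sum>k\<in>I. a k * f k x)"
    using assms by (intro continuous_intros) (auto simp: Vh0_def)
  ultimately show ?thesis using assms by (auto simp: Vh0_def)
qed

lemma Vh0_0: "(\<lambda>x. 0) \<in> Vh0 \<Omega> Th p"
  using Vh0_sum[of "{}"] by simp

lemma Vh0_cmult: "f \<in> Vh0 \<Omega> Th p \<Longrightarrow> (\<lambda>x. r * f x) \<in> Vh0 \<Omega> Th p"
  using Vh0_sum[of "{()}" "\<lambda>_. f" \<Omega> Th p "\<lambda>_. r"] by simp

lemma Vh0_diff:
  assumes "f \<in> Vh0 \<Omega> Th p" "g \<in> Vh0 \<Omega> Th p"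
  shows "(\<lambda>x. f x - g x) \<in> Vh0 \<Omega> Th p"
  using Vh0_sum[of "{True, False}" "\<lambda>k. if k then f else g" \<Omega> Th p "\<lambda>k. if k then 1 else -1"] assms
  by simp

lemma conforming_simplicial_mesh_cell:
  assumes "conforming_simplicial_mesh \<Omega> Th" "K \<in> Th"
  shows "convex K" "compact K" "closed K" "interior K \<noteq> {}"
proof -
  have S: "int DIM('a) simplex K" using assms unfolding conforming_simplicial_mesh_def by blast
  show "convex K" "compact K" "closed K"
    using convex_simplex[OF S] compact_simplex[OF S] closed_simplex[OF S] .
  obtain C where C: "\<not> affine_dependent C" "int (card C) = int DIM('a) + 1" "K = convex hull C"
    using S unfolding simplex_def by blast
  then have "card C = Suc DIM('a)" by simp
  then show "interior K \<noteq> {}" using interior_convex_hull_eq_empty C by blast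
qed

lemma AE_in_interior_mesh_cell:
  fixes \<Omega> :: "'a::euclidean_space set"
  assumes mesh: "conforming_simplicial_mesh \<Omega> Th"
  shows "AE x in lborel. x \<in> closure \<Omega> \<longrightarrow> (\<exists>K\<in>Th. x \<in> interior K)"
proof (rule AE_I')
  have fin: "finite Th" using mesh unfolding conforming_simplicial_mesh_def by blast
  have "negligible (\<Union>(frontier ` Th))"
    using fin conforming_simplicial_mesh_cell[OF mesh]
    by (intro negligible_Union) (auto intro: negligible_convex_frontier)
  moreover have "\<Union>(frontier ` Th) \<in> sets borel"
    using fin by (intro sets.finite_Union) auto
  ultimately show "\<Union>(frontier ` Th) \<in> null_sets lborel"
    by (auto simp: negligible_iff_null_sets null_sets_completion_iff)
  have "x \<in> \<Union>(frontier ` Th)" if "x \<in> closure \<Omega>" "\<forall>K\<in>Th. x \<notin> interior K" for x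
  proof -
    have "x \<in> \<Union>Th" using mesh that(1) unfolding conforming_simplicial_mesh_def by auto
    then obtain K where "K \<in> Th" "x \<in> K" by blast
    then show ?thesis
      using that(2) conforming_simplicial_mesh_cell(3)[OF mesh] by (auto simp: frontier_def)
  qed
  then show "{x \<in> space lborel. \<not> (x \<in> closure \<Omega> \<longrightarrow> (\<exists>K\<in>Th. x \<in> interior K))}
      \<subseteq> \<Union>(frontier ` Th)"
    by blast
qed

lemma grad_eq_on_interior:
  assumes "P differentiable (at x)" "\<forall>y\<in>K. f y = P y" "x \<in> interior K"
  shows "grad f x = grad P x" "f differentiable (at x)"
proof -
  have "(P has_derivative frechet_derivative P (at x)) (at x)"
    using assms(1) frechet_derivative_works by blast
  then have df: "(f has_derivative frechet_derivative P (at x)) (at x)"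
    by (rule has_derivative_transform_within_open[OF _ open_interior assms(3)])
       (use assms(2) interior_subset[of K] in \<open>metis subsetD\<close>)
  then have "frechet_derivative f (at x) = frechet_derivative P (at x)"
    by (rule frechet_derivative_at[symmetric])
  then show "grad f x = grad P x" unfolding grad_def by simp
  show "f differentiable (at x)" using df by (auto simp: differentiable_def)
qed

lemma Vh0_differentiable:
  assumes "f \<in> Vh0 \<Omega> Th p" "K \<in> Th" "x \<in> interior K"
  shows "f differentiable (at x)"
proof -
  obtain P where "poly_fun_le p P" "\<forall>y\<in>K. f y = P y" using assms unfolding Vh0_def by blast
  then show ?thesis using grad_eq_on_interior(2) assms(3) poly_fun_le_differentiable by metis
qed

lemma grad_lincomb:
  fixes f :: "'i \<Rightarrow> 'a::euclidean_space \<Rightarrow> real"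
  assumes "finite I" "\<And>k. k \<in> I \<Longrightarrow> f k differentiable (at x)"
  shows "grad (\<lambda>y. \<Sum>k\<in>I. a k * f k y) x = (\<Sum>k\<in>I. a k *\<^sub>R grad (f k) x)"
proof -
  have "((\<lambda>y. \<Sum>k\<in>I. a k * f k y) has_derivative
      (\<lambda>h. \<Sum>k\<in>I. a k * frechet_derivative (f k) (at x) h)) (at x)"
    using assms(2) frechet_derivative_works
    by (intro has_derivative_sum has_derivative_mult_right) blast
  then have "frechet_derivative (\<lambda>y. \<Sum>k\<in>I. a k * f k y) (at x) =
      (\<lambda>h. \<Sum>k\<in>I. a k * frechet_derivative (f k) (at x) h)"
    by (rule frechet_derivative_at[symmetric])
  then show ?thesis
    unfolding grad_def by (simp add: scaleR_sum_left scaleR_sum_right sum.swap[of _ I])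
qed

lemma Vh0_grad_bounded:
  assumes mesh: "conforming_simplicial_mesh \<Omega> Th" and f: "f \<in> Vh0 \<Omega> Th p"
  obtains M where "AE x in lborel. x \<in> closure \<Omega> \<longrightarrow> norm (grad f x) \<le> M"
proof -
  have "\<exists>M\<ge>0. \<forall>x\<in>interior K. norm (grad f x) \<le> M" if K: "K \<in> Th" for K
  proof -
    obtain P where P: "poly_fun_le p P" "\<forall>y\<in>K. f y = P y" using f K unfolding Vh0_def by blast
    have "compact (grad P ` K)"
      by (rule compact_continuous_image[OF continuous_on_subset])
         (use continuous_on_grad_poly_fun_le[OF P(1)] conforming_simplicial_mesh_cell[OF mesh K] in auto)
    then obtain M where "M > 0" "\<forall>y\<in>K. norm (grad P y) \<le> M"
      using compact_imp_bounded bounded_pos by (metis imageI)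
    moreover have "grad f x = grad P x" if "x \<in> interior K" for x
      using grad_eq_on_interior(1)[OF poly_fun_le_differentiable[OF P(1)] P(2) that] .
    ultimately show ?thesis using interior_subset by (intro exI[of _ M]) fastforce
  qed
  then obtain M where M: "\<forall>K\<in>Th. M K \<ge> 0 \<and> (\<forall>x\<in>interior K. norm (grad f x) \<le> M K)" by metis
  have "finite Th" using mesh unfolding conforming_simplicial_mesh_def by blast
  have bound: "norm (grad f x) \<le> (\<Sum>K\<in>Th. M K)" if "K \<in> Th" "x \<in> interior K" for K x
  proof -
    have "norm (grad f x) \<le> M K" using M that by blast
    also have "\<dots> \<le> (\<Sum>K\<in>Th. M K)" using M that \<open>finite Th\<close> by (intro member_le_sum) auto
    finally show ?thesis .
  qed
  show ?thesis
    by (rule that, rule AE_mp[OF AE_in_interior_mesh_cell[OF mesh]], rule AE_I2) (use bound in blast)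
qed

lemma grad_inner_Basis: "b \<in> Basis \<Longrightarrow> grad f x \<bullet> b = frechet_derivative f (at x) b"
  unfolding grad_def by (simp add: inner_sum_left inner_Basis if_distrib cong: if_cong)

lemma has_derivative_zero_if_grad_eq_0:
  fixes P :: "'a::euclidean_space \<Rightarrow> real"
  assumes "P differentiable (at x)" "grad P x = 0"
  shows "(P has_derivative (\<lambda>h. 0)) (at x)"
proof -
  let ?F = "frechet_derivative P (at x)"
  have d: "(P has_derivative ?F) (at x)" using assms(1) frechet_derivative_works by blast
  have "?F h = 0" for h
  proof -
    have "?F h = (\<Sum>b\<in>Basis. (h \<bullet> b) * ?F b)"
      using Linear_Algebra.linear_componentwise[OF has_derivative_linear[OF d], of h 1] by simp
    also have "\<dots> = 0"
      by (intro sum.neutral) (simp add: grad_inner_Basis[symmetric] assms(2))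
    finally show ?thesis .
  qed
  then have "?F = (\<lambda>h. 0)" by blast
  then show ?thesis using d by simp
qed

lemma Vh0_local_grad_eq_0:
  fixes \<Omega> :: "'a::euclidean_space set"
  assumes dom: "polytopic_domain \<Omega>" and mesh: "conforming_simplicial_mesh \<Omega> Th"
    and K: "K \<in> Th" and P: "poly_fun_le p P" "\<forall>y\<in>K. m y = P y"
    and ae: "AE x in lborel. x \<in> \<Omega> \<longrightarrow> grad m x = 0"
    and y: "y \<in> interior K"
  shows "grad P y = 0"
proof (rule ccontr)
  assume "grad P y \<noteq> 0"
  have "open \<Omega>" using dom unfolding polytopic_domain_def by auto
  have cov: "\<Union>Th = closure \<Omega>" using mesh unfolding conforming_simplicial_mesh_def by auto
  obtain N where N: "{x. \<not> (x \<in> \<Omega> \<longrightarrow> grad m x = 0)} \<subseteq> N" "N \<in> null_sets lborel"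
    using ae by (auto elim!: AE_E simp: null_sets_def)
  have "negligible N"
    using N(2) by (metis negligible_iff_null_sets null_setsD2 null_sets_completion_iff)
  define U where "U = interior K \<inter> {y. grad P y \<noteq> 0}"
  have "open U" unfolding U_def
    using open_Collect_neq[OF continuous_on_grad_poly_fun_le[OF P(1)] continuous_on_const] by blast
  have "U \<noteq> {}" using y \<open>grad P y \<noteq> 0\<close> unfolding U_def by blast
  moreover have "U \<subseteq> closure \<Omega>" using K cov interior_subset[of K] unfolding U_def by blast
  ultimately have "U \<inter> closure \<Omega> \<noteq> {}" by blast
  then have "U \<inter> \<Omega> \<noteq> {}" using open_Int_closure_eq_empty[OF \<open>open U\<close>] by blast
  moreover have "open (U \<inter> \<Omega>)" using \<open>open U\<close> \<open>open \<Omega>\<close> by blast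
  moreover have "U \<inter> \<Omega> \<subseteq> N"
  proof
    fix z assume z: "z \<in> U \<inter> \<Omega>"
    then have "grad m z = grad P z"
      using grad_eq_on_interior(1)[OF poly_fun_le_differentiable[OF P(1)] P(2)] U_def by blast
    then show "z \<in> N" using N(1) z U_def by auto
  qed
  ultimately show False
    using open_not_negligible negligible_subset[OF \<open>negligible N\<close>] by blast
qed

lemma Vh0_constant_on_cell:
  fixes \<Omega> :: "'a::euclidean_space set"
  assumes dom: "polytopic_domain \<Omega>" and mesh: "conforming_simplicial_mesh \<Omega> Th"
    and m: "m \<in> Vh0 \<Omega> Th p" and K: "K \<in> Th"
    and ae: "AE x in lborel. x \<in> \<Omega> \<longrightarrow> grad m x = 0"
  shows "\<exists>c. \<forall>y\<in>K. m y = c"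
proof -
  obtain P where P: "poly_fun_le p P" "\<forall>y\<in>K. m y = P y" using m K unfolding Vh0_def by blast
  have "\<exists>c. \<forall>y\<in>interior K. P y = c"
  proof (rule has_derivative_zero_constant)
    show "convex (interior K)" using conforming_simplicial_mesh_cell(1)[OF mesh K] by simp
    fix y assume "y \<in> interior K"
    then show "(P has_derivative (\<lambda>h. 0)) (at y within interior K)"
      using has_derivative_zero_if_grad_eq_0[OF poly_fun_le_differentiable[OF P(1)]
          Vh0_local_grad_eq_0[OF dom mesh K P ae]]
        has_derivative_at_withinI by blast
  qed
  then obtain c where "\<forall>y\<in>interior K. P y = c" by blast
  then have "interior K \<subseteq> {y. m y = c}" using P(2) interior_subset[of K] by auto
  then have "closure (interior K) \<subseteq> {y. m y = c}"
    by (rule closure_minimal) (use closed_Collect_eq[OF Vh0_continuous[OF m] continuous_on_const] in auto)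
  moreover have "closure (interior K) = K"
    using convex_closure_interior conforming_simplicial_mesh_cell[OF mesh K] closure_closed by metis
  ultimately show ?thesis by blast
qed

text \<open>Being constant on every cell, the function takes finitely many values on the connected set
  \<open>closure \<Omega>\<close>, so it is constant there; it vanishes on the nonempty boundary.\<close>

lemma Vh0_eq_0_if_grad_AE_0:
  fixes \<Omega> :: "'a::euclidean_space set"
  assumes dom: "polytopic_domain \<Omega>" and mesh: "conforming_simplicial_mesh \<Omega> Th"
    and m: "m \<in> Vh0 \<Omega> Th p"
    and ae: "AE x in lborel. x \<in> \<Omega> \<longrightarrow> grad m x = 0"
  shows "m x = 0"
proof -
  have fin: "finite Th" and cov: "\<Union>Th = closure \<Omega>"
    using mesh unfolding conforming_simplicial_mesh_def by auto
  have "open \<Omega>" "connected \<Omega>" "\<Omega> \<noteq> {}" "bounded \<Omega>"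
    using dom unfolding polytopic_domain_def by auto
  have "\<forall>K\<in>Th. \<exists>c. \<forall>y\<in>K. m y = c"
    using Vh0_constant_on_cell[OF dom mesh m _ ae] by blast
  then obtain c where c: "\<forall>K\<in>Th. \<forall>y\<in>K. m y = c K" by metis
  have "m ` closure \<Omega> \<subseteq> c ` Th" using c cov by blast
  then have "finite (m ` closure \<Omega>)" using fin finite_subset by blast
  then have const: "m constant_on closure \<Omega>"
    using continuous_finite_range_constant[OF connected_imp_connected_closure[OF \<open>connected \<Omega>\<close>]
        continuous_on_subset[OF Vh0_continuous[OF m]]]
    by blast
  obtain y0 where "y0 \<in> frontier \<Omega>"
    using \<open>\<Omega> \<noteq> {}\<close> \<open>bounded \<Omega>\<close> frontier_eq_empty not_bounded_UNIV by blast
  then have y0: "y0 \<in> closure \<Omega>" "m y0 = 0"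
    using \<open>open \<Omega>\<close> m by (auto simp: frontier_def interior_open Vh0_def)
  show "m x = 0"
  proof (cases "x \<in> closure \<Omega>")
    case True
    then show ?thesis using const y0 unfolding constant_on_def by metis
  next
    case False
    then have "x \<notin> \<Omega>" using closure_subset by blast
    then show ?thesis using m unfolding Vh0_def by blast
  qed
qed

section \<open>The weighted stiffness form\<close>

lemma AE_grad_Vh0_lincomb:
  fixes f :: "'i \<Rightarrow> 'a::euclidean_space \<Rightarrow> real"
  assumes mesh: "conforming_simplicial_mesh \<Omega> Th"
    and I: "finite I" and f: "\<And>k. k \<in> I \<Longrightarrow> f k \<in> Vh0 \<Omega> Th p"
  shows "AE x in lborel. x \<in> \<Omega> \<longrightarrow>
    grad (\<lambda>y. \<Sum>k\<in>I. a k * f k y) x = (\<Sum>k\<in>I. a k *\<^sub>R grad (f k) x)"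
  using AE_in_interior_mesh_cell[OF mesh]
proof eventually_elim
  case (elim x)
  show ?case
  proof
    assume "x \<in> \<Omega>"
    then obtain K where "K \<in> Th" "x \<in> interior K" using elim closure_subset by blast
    then show "grad (\<lambda>y. \<Sum>k\<in>I. a k * f k y) x = (\<Sum>k\<in>I. a k *\<^sub>R grad (f k) x)"
      using I f by (blast intro: grad_lincomb Vh0_differentiable)
  qed
qed

locale wave_speed =
  fixes \<Omega> :: "'a::euclidean_space set" and Th :: "'a set set" and c :: "'a \<Rightarrow> real"
    and c_lo c_hi :: real and p :: nat
  assumes dom: "polytopic_domain \<Omega>" and mesh: "conforming_simplicial_mesh \<Omega> Th"
    and c_cont: "continuous_on (closure \<Omega>) c"
    and c_lo: "0 < c_lo" and c_bnd: "\<forall>x\<in>closure \<Omega>. c_lo < c x \<and> c x < c_hi"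
begin

definition c_ext :: "'a \<Rightarrow> real" where "c_ext x = indicator \<Omega> x * c x"

definition stiffness :: "('a \<Rightarrow> real) \<Rightarrow> ('a \<Rightarrow> real) \<Rightarrow> real" where
  "stiffness f g = (LINT x|lborel. (c_ext x)\<^sup>2 * (grad f x \<bullet> grad g x))"

lemma open_domain: "open \<Omega>" and bounded_domain: "bounded \<Omega>"
  using dom unfolding polytopic_domain_def by auto

lemma borel_measurable_c_ext[measurable]: "c_ext \<in> borel_measurable borel"
proof -
  have "(\<lambda>x. indicator \<Omega> x *\<^sub>R c x) \<in> borel_measurable borel"
    by (rule borel_measurable_continuous_on_indicator)
       (use open_domain continuous_on_subset[OF c_cont closure_subset] in auto)
  then show ?thesis unfolding c_ext_def[abs_def] by simp
qed

lemma c_in_domain: "x \<in> \<Omega> \<Longrightarrow> c_lo < c x \<and> c x < c_hi"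
  using c_bnd closure_subset[of \<Omega>] by blast

lemma c_ext_bounds: "0 \<le> c_ext x" "c_ext x \<le> c_hi" "x \<in> \<Omega> \<Longrightarrow> 0 < c_ext x"
proof -
  obtain y where "y \<in> \<Omega>" using dom unfolding polytopic_domain_def by blast
  then have "0 < c_hi" using c_in_domain[of y] c_lo by linarith
  then show "0 \<le> c_ext x" "c_ext x \<le> c_hi" "x \<in> \<Omega> \<Longrightarrow> 0 < c_ext x"
    using c_in_domain[of x] c_lo by (auto simp: c_ext_def indicator_def)
qed

lemma set_integral_c_squared:
  "(LINT x:\<Omega>|lborel. (c x)\<^sup>2 * G x) = (LINT x|lborel. (c_ext x)\<^sup>2 * G x)"
  unfolding set_lebesgue_integral_def c_ext_def
  by (rule Bochner_Integration.integral_cong) (auto simp: indicator_def power2_eq_square)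

lemma integrable_stiffness:
  assumes f: "f \<in> Vh0 \<Omega> Th p" and g: "g \<in> Vh0 \<Omega> Th p"
  shows "integrable lborel (\<lambda>x. (c_ext x)\<^sup>2 * (grad f x \<bullet> grad g x))"
proof -
  have [measurable]: "grad f \<in> borel_measurable borel" "grad g \<in> borel_measurable borel"
    using borel_measurable_grad Vh0_continuous f g by blast+
  obtain Mf where Mf: "AE x in lborel. x \<in> closure \<Omega> \<longrightarrow> norm (grad f x) \<le> Mf"
    using Vh0_grad_bounded[OF mesh f] by blast
  obtain Mg where Mg: "AE x in lborel. x \<in> closure \<Omega> \<longrightarrow> norm (grad g x) \<le> Mg"
    using Vh0_grad_bounded[OF mesh g] by blast
  have "integrable lborel (\<lambda>x. indicator \<Omega> x * (c_hi\<^sup>2 * (\<bar>Mf\<bar> * \<bar>Mg\<bar>)))"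
    using emeasure_bounded_finite[OF bounded_domain] open_domain by (intro integrable_mult_left) auto
  then show ?thesis
  proof (rule Bochner_Integration.integrable_bound)
    show "AE x in lborel. norm ((c_ext x)\<^sup>2 * (grad f x \<bullet> grad g x))
        \<le> norm (indicator \<Omega> x * (c_hi\<^sup>2 * (\<bar>Mf\<bar> * \<bar>Mg\<bar>)))"
      using Mf Mg
    proof eventually_elim
      case (elim x)
      show ?case
      proof (cases "x \<in> \<Omega>")
        case True
        have "\<bar>grad f x \<bullet> grad g x\<bar> \<le> norm (grad f x) * norm (grad g x)"
          by (rule Cauchy_Schwarz_ineq2)
        also have "\<dots> \<le> \<bar>Mf\<bar> * \<bar>Mg\<bar>" using elim True closure_subset by (intro mult_mono) auto
        finally have "\<bar>grad f x \<bullet> grad g x\<bar> \<le> \<bar>Mf\<bar> * \<bar>Mg\<bar>" .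
        moreover have "(c_ext x)\<^sup>2 \<le> c_hi\<^sup>2" using c_ext_bounds[of x] by (intro power_mono) auto
        ultimately show ?thesis using True by (simp add: abs_mult mult_mono)
      qed (simp add: c_ext_def)
    qed
  qed measurable
qed

lemma stiffness_lincomb:
  fixes f :: "'i \<Rightarrow> 'a \<Rightarrow> real" and g :: "'j \<Rightarrow> 'a \<Rightarrow> real"
  assumes I: "finite I" and J: "finite J"
    and f: "\<And>k. k \<in> I \<Longrightarrow> f k \<in> Vh0 \<Omega> Th p" and g: "\<And>l. l \<in> J \<Longrightarrow> g l \<in> Vh0 \<Omega> Th p"
  shows "stiffness (\<lambda>y. \<Sum>k\<in>I. a k * f k y) (\<lambda>y. \<Sum>l\<in>J. b l * g l y)
       = (\<Sum>k\<in>I. \<Sum>l\<in>J. a k * b l * stiffness (f k) (g l))"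
proof -
  have [measurable]: "grad (\<lambda>y. \<Sum>k\<in>I. a k * f k y) \<in> borel_measurable borel"
    "grad (\<lambda>y. \<Sum>l\<in>J. b l * g l y) \<in> borel_measurable borel"
    using f g by (intro borel_measurable_grad continuous_intros Vh0_continuous; blast)+
  have [measurable]: "grad (f k) \<in> borel_measurable borel" if "k \<in> I" for k
    using borel_measurable_grad Vh0_continuous f that by blast
  have [measurable]: "grad (g l) \<in> borel_measurable borel" if "l \<in> J" for l
    using borel_measurable_grad Vh0_continuous g that by blast
  have "stiffness (\<lambda>y. \<Sum>k\<in>I. a k * f k y) (\<lambda>y. \<Sum>l\<in>J. b l * g l y)
      = (LINT x|lborel. (\<Sum>k\<in>I. \<Sum>l\<in>J. a k * b l * ((c_ext x)\<^sup>2 * (grad (f k) x \<bullet> grad (g l) x))))"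
    unfolding stiffness_def
  proof (rule integral_cong_AE)
    show "(\<lambda>x. (c_ext x)\<^sup>2 *
        (grad (\<lambda>y. \<Sum>k\<in>I. a k * f k y) x \<bullet> grad (\<lambda>y. \<Sum>l\<in>J. b l * g l y) x))
        \<in> borel_measurable lborel"
      by measurable
    show "(\<lambda>x. \<Sum>k\<in>I. \<Sum>l\<in>J. a k * b l * ((c_ext x)\<^sup>2 * (grad (f k) x \<bullet> grad (g l) x)))
        \<in> borel_measurable lborel"
      using I J by measurable
    have "AE x in lborel. x \<in> \<Omega> \<longrightarrow>
        grad (\<lambda>y. \<Sum>k\<in>I. a k * f k y) x = (\<Sum>k\<in>I. a k *\<^sub>R grad (f k) x)"
      using f by (rule AE_grad_Vh0_lincomb[OF mesh I])
    moreover have "AE x in lborel. x \<in> \<Omega> \<longrightarrow>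
        grad (\<lambda>y. \<Sum>l\<in>J. b l * g l y) x = (\<Sum>l\<in>J. b l *\<^sub>R grad (g l) x)"
      using g by (rule AE_grad_Vh0_lincomb[OF mesh J])
    ultimately show "AE x in lborel. (c_ext x)\<^sup>2 *
          (grad (\<lambda>y. \<Sum>k\<in>I. a k * f k y) x \<bullet> grad (\<lambda>y. \<Sum>l\<in>J. b l * g l y) x)
        = (\<Sum>k\<in>I. \<Sum>l\<in>J. a k * b l * ((c_ext x)\<^sup>2 * (grad (f k) x \<bullet> grad (g l) x)))"
    proof eventually_elim
      case (elim x)
      show ?case
      proof (cases "x \<in> \<Omega>")
        case True
        then show ?thesis using elim
          by (simp add: inner_sum_left inner_sum_right sum_distrib_left mult_ac sum.swap[of _ J I])
      qed (simp add: c_ext_def)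
    qed
  qed
  also have "\<dots> = (\<Sum>k\<in>I. \<Sum>l\<in>J. a k * b l * stiffness (f k) (g l))"
    unfolding stiffness_def using integrable_stiffness f g by (simp add: integrable_sum)
  finally show ?thesis .
qed

lemma stiffness_lincomb_left:
  assumes "finite I" "\<And>k. k \<in> I \<Longrightarrow> f k \<in> Vh0 \<Omega> Th p" "m \<in> Vh0 \<Omega> Th p"
  shows "stiffness (\<lambda>x. \<Sum>k\<in>I. a k * f k x) m = (\<Sum>k\<in>I. a k * stiffness (f k) m)"
  using stiffness_lincomb[of I "{()}" f "\<lambda>_. m" a "\<lambda>_. 1"] assms by simp

lemma stiffness_diff_left:
  assumes "f \<in> Vh0 \<Omega> Th p" "g \<in> Vh0 \<Omega> Th p" "m \<in> Vh0 \<Omega> Th p"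
  shows "stiffness (\<lambda>x. f x - g x) m = stiffness f m - stiffness g m"
  using stiffness_lincomb_left[of "{True, False}" "\<lambda>k. if k then f else g" m "\<lambda>k. if k then 1 else -1"]
    assms by simp

lemma stiffness_self_eq_0D:
  assumes m: "m \<in> Vh0 \<Omega> Th p" and "stiffness m m = 0"
  shows "m x = 0"
proof (rule Vh0_eq_0_if_grad_AE_0[OF dom mesh m])
  have "AE x in lborel. (c_ext x)\<^sup>2 * (grad m x \<bullet> grad m x) = 0"
    using assms(2) integral_nonneg_eq_0_iff_AE[OF integrable_stiffness[OF m m]]
    unfolding stiffness_def by simp
  then show "AE x in lborel. x \<in> \<Omega> \<longrightarrow> grad m x = 0"
    by eventually_elim (use c_ext_bounds(3) in fastforce)
qed

end

section \<open>Legendre polynomials on an interval\<close>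

lemma pderiv_sum: "pderiv (sum f A) = (\<Sum>x\<in>A. pderiv (f x))"
  by (induction A rule: infinite_finite_induct) (simp_all add: pderiv_add)

definition poly_antideriv :: "real poly \<Rightarrow> real poly" where
  "poly_antideriv p = (\<Sum>i\<le>degree p. monom (coeff p i / real (Suc i)) (Suc i))"

lemma pderiv_poly_antideriv: "pderiv (poly_antideriv p) = p"
proof -
  have "pderiv (poly_antideriv p) = (\<Sum>i\<le>degree p. monom (coeff p i) i)"
    unfolding poly_antideriv_def pderiv_sum pderiv_monom by (simp del: of_nat_Suc)
  also have "\<dots> = p" by (rule poly_as_sum_of_monoms)
  finally show ?thesis .
qed

lemma integral_poly_pderiv:
  fixes P :: "real poly"
  assumes "a \<le> t"
  shows "integral {a..t} (poly (pderiv P)) = poly P t - poly P a"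
proof -
  have "(poly (pderiv P) has_integral (poly P t - poly P a)) {a..t}"
    by (rule fundamental_theorem_of_calculus[OF assms])
       (auto simp: has_real_derivative_iff_has_vector_derivative[symmetric]
             intro: DERIV_subset[OF poly_DERIV])
  then show ?thesis by (rule integral_unique)
qed

lemma integrable_on_poly: "poly (p :: real poly) integrable_on {a..b}"
  by (intro integrable_continuous_interval continuous_intros)

locale poly_interval =
  fixes a b :: real
  assumes a_less_b: "a < b"
begin

definition Ipoly :: "real poly \<Rightarrow> real" where "Ipoly p = integral {a..b} (poly p)"

lemma Ipoly_add: "Ipoly (p + q) = Ipoly p + Ipoly q"
proof -
  have "poly (p + q) = (\<lambda>x. poly p x + poly q x)" by auto
  then show ?thesis unfolding Ipoly_def by (simp add: integral_add integrable_on_poly)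
qed

lemma Ipoly_diff: "Ipoly (p - q) = Ipoly p - Ipoly q"
proof -
  have "poly (p - q) = (\<lambda>x. poly p x - poly q x)" by (auto simp: poly_diff)
  then show ?thesis unfolding Ipoly_def by (simp add: integral_diff integrable_on_poly)
qed

lemma Ipoly_smult: "Ipoly (smult c p) = c * Ipoly p"
proof -
  have "poly (smult c p) = (\<lambda>x. c * poly p x)" by auto
  then show ?thesis unfolding Ipoly_def by simp
qed

lemma Ipoly_0: "Ipoly 0 = 0"
proof -
  have "poly 0 = (\<lambda>x. 0 :: real)" by auto
  then show ?thesis unfolding Ipoly_def by simp
qed

lemma Ipoly_sum: "Ipoly (sum f A) = (\<Sum>x\<in>A. Ipoly (f x))"
  by (induction A rule: infinite_finite_induct) (simp_all add: Ipoly_add Ipoly_0)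

lemma Ipoly_pderiv: "Ipoly (pderiv P) = poly P b - poly P a"
  unfolding Ipoly_def using integral_poly_pderiv a_less_b by simp

lemma Ipoly_by_parts:
  "Ipoly (pderiv P * Q) = poly P b * poly Q b - poly P a * poly Q a - Ipoly (P * pderiv Q)"
proof -
  have "Ipoly (pderiv (P * Q)) = Ipoly (P * pderiv Q) + Ipoly (pderiv P * Q)"
    by (simp add: pderiv_mult Ipoly_add mult.commute)
  then show ?thesis using Ipoly_pderiv[of "P * Q"] by simp
qed

lemma Ipoly_square_eq_0D:
  assumes "Ipoly (p * p) = 0" shows "p = 0"
proof (rule ccontr)
  assume "p \<noteq> 0"
  have "poly (p * p) x = 0" if "x \<in> {a..b}" for x
  proof (rule has_integral_0_cbox_imp_0[of a b "poly (p * p)"])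
    show "(poly (p * p) has_integral 0) (cbox a b)"
      using assms integrable_on_poly[of "p * p" a b] unfolding Ipoly_def
      by (simp add: has_integral_integral)
  qed (use that a_less_b in \<open>auto intro!: continuous_intros\<close>)
  then have "{a..b} \<subseteq> {x. poly p x = 0}" by auto
  then show False
    using poly_roots_finite[OF \<open>p \<noteq> 0\<close>] infinite_Icc[OF a_less_b] finite_subset by blast
qed

lemma Ipoly_reflect: "Ipoly (pcompose p [:a + b, -1:]) = Ipoly p"
proof -
  let ?r = "[:a + b, -1:]"
  have "pderiv (- pcompose (poly_antideriv p) ?r) = pcompose p ?r"
    by (simp add: pderiv_pcompose pderiv_poly_antideriv pderiv_pCons pderiv_minus)
  then have "Ipoly (pcompose p ?r) = poly (poly_antideriv p) b - poly (poly_antideriv p) a"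
    using Ipoly_pderiv[of "- pcompose (poly_antideriv p) ?r"] by (simp add: poly_pcompose)
  also have "\<dots> = Ipoly p"
    using Ipoly_pderiv[of "poly_antideriv p"] by (simp add: pderiv_poly_antideriv)
  finally show ?thesis .
qed

definition orth_below :: "nat \<Rightarrow> real poly \<Rightarrow> bool" where
  "orth_below q L \<longleftrightarrow> (\<forall>r. degree r < q \<longrightarrow> Ipoly (L * r) = 0)"

lemma orth_below_degree_less_eq_0: "orth_below q D \<Longrightarrow> degree D < q \<Longrightarrow> D = 0"
  unfolding orth_below_def using Ipoly_square_eq_0D by blast

lemma orth_belowI_monom:
  assumes "\<And>j. j < q \<Longrightarrow> Ipoly (L * monom 1 j) = 0"
  shows "orth_below q L"
  unfolding orth_below_def
proof (intro allI impI)
  fix r :: "real poly" assume r: "degree r < q"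
  have "L * r = (\<Sum>i\<le>degree r. smult (coeff r i) (L * monom 1 i))"
    by (subst poly_as_sum_of_monoms[symmetric])
       (simp add: sum_distrib_left smult_monom flip: mult_smult_right)
  then have "Ipoly (L * r) = (\<Sum>i\<le>degree r. coeff r i * Ipoly (L * monom 1 i))"
    by (simp add: Ipoly_sum Ipoly_smult)
  also have "\<dots> = 0" using assms r by (intro sum.neutral) auto
  finally show "Ipoly (L * r) = 0" .
qed

lemma orth_below_unique:
  assumes "orth_below q P" "orth_below q Q" "degree P \<le> q" "degree Q \<le> q"
    and "coeff P q = coeff Q q"
  shows "P = Q"
proof -
  have "orth_below q (P - Q)"
    using assms(1,2) unfolding orth_below_def by (simp add: algebra_simps Ipoly_diff)
  moreover have "degree (P - Q) < q \<or> P - Q = 0"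
    using assms(3-5) degree_diff_le[of P q Q]
    by (metis coeff_diff diff_self le_neq_implies_less leading_coeff_0_iff)
  ultimately have "P - Q = 0" using orth_below_degree_less_eq_0 by blast
  then show ?thesis by simp
qed

lemma orth_below_smult: "orth_below q L \<Longrightarrow> orth_below q (smult c L)"
  unfolding orth_below_def by (simp add: Ipoly_smult)

end

text \<open>\<open>L\<close> is a multiple of the \<open>q\<close>-th Legendre polynomial transported to \<open>[a, b]\<close>.\<close>

locale legendre = poly_interval +
  fixes q :: nat and L :: "real poly"
  assumes q_pos: "q \<ge> 1" and degree_L: "degree L \<le> q" and orth_L: "orth_below q L"
begin

definition bubble :: "real poly" where "bubble = [:-(a * b), a + b, -1:]"

definition kappa :: real where "kappa = real (q * (q + 1))"

lemma kappa_pos: "kappa > 0"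
  unfolding kappa_def of_nat_0_less_iff using q_pos by simp

lemma poly_bubble: "poly bubble t = (t - a) * (b - t)"
  by (simp add: bubble_def algebra_simps)

lemma bubble_endpoints [simp]: "poly bubble a = 0" "poly bubble b = 0"
  by (simp_all add: poly_bubble)

lemma bubble_bounds:
  assumes "t \<in> {a..b}"
  shows "0 \<le> poly bubble t" "poly bubble t \<le> (b - a)\<^sup>2 / 4"
proof -
  show "0 \<le> poly bubble t" using assms by (simp add: poly_bubble)
  have "(b - a)\<^sup>2 / 4 - poly bubble t = (t - (a + b) / 2)\<^sup>2"
    by (simp add: poly_bubble power2_eq_square field_simps)
  then show "poly bubble t \<le> (b - a)\<^sup>2 / 4" by (metis diff_ge_0_iff_ge zero_le_power2)
qed

lemma orth_L_degree_less: "degree r < q \<Longrightarrow> Ipoly (L * r) = 0"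
  using orth_L unfolding orth_below_def by blast

lemma degree_L_eq: "L \<noteq> 0 \<Longrightarrow> degree L = q"
  using orth_below_degree_less_eq_0[OF orth_L] degree_L by fastforce

text \<open>Legendre's differential equation, from the self-adjointness of
  \<open>r \<mapsto> (bubble r')'\<close> and a comparison of leading coefficients.\<close>

lemma legendre_ode: "pderiv (bubble * pderiv L) = smult (- kappa) L"
proof -
  define R where "R = pderiv (bubble * pderiv L) + smult kappa L"
  have "Ipoly (R * r) = 0" if r: "degree r < q" for r
  proof -
    have "degree (pderiv (bubble * pderiv r)) < q"
    proof (cases "degree r = 0")
      case True
      then show ?thesis using q_pos by (simp add: pderiv_eq_0_iff[THEN iffD2])
    next
      case False
      have "degree (bubble * pderiv r) \<le> 2 + (degree r - 1)"
        using degree_mult_le[of bubble "pderiv r"] by (simp add: bubble_def degree_pderiv)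
      then show ?thesis using False r by (simp add: degree_pderiv)
    qed
    moreover have "Ipoly (pderiv (bubble * pderiv L) * r) = Ipoly (L * pderiv (bubble * pderiv r))"
      using Ipoly_by_parts[of "bubble * pderiv L" r] Ipoly_by_parts[of L "bubble * pderiv r"]
      by (simp add: poly_bubble mult_ac)
    ultimately show ?thesis
      unfolding R_def by (simp add: distrib_right Ipoly_add Ipoly_smult orth_L_degree_less r)
  qed
  then have "orth_below q R" unfolding orth_below_def by blast
  moreover have "degree R \<le> q"
  proof -
    have "degree (bubble * pderiv L) \<le> 2 + (q - 1)"
      using degree_mult_le[of bubble "pderiv L"] degree_L by (simp add: bubble_def degree_pderiv)
    then have "degree (pderiv (bubble * pderiv L)) \<le> q" using q_pos by (simp add: degree_pderiv)
    then show ?thesis unfolding R_def using degree_L by (meson degree_add_le degree_smult_le le_trans)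
  qed
  moreover have "coeff R q = 0"
  proof -
    obtain q' where q': "q = Suc q'" using q_pos by (cases q) auto
    have "coeff L (Suc q) = 0" "coeff L (Suc (Suc q)) = 0" using degree_L by (simp_all add: coeff_eq_0)
    then show ?thesis unfolding R_def bubble_def kappa_def by (simp add: q' coeff_pderiv algebra_simps)
  qed
  ultimately have "R = 0"
    using orth_below_unique[of q R 0] by (simp add: orth_below_def Ipoly_0)
  then show ?thesis unfolding R_def by (simp add: eq_neg_iff_add_eq_0)
qed

text \<open>The energy \<open>kappa L\<^sup>2 + bubble L'\<^sup>2\<close> decreases on the left half of the interval and
  increases on the right half, so it is maximal at an endpoint.\<close>

definition energy :: "real poly" where
  "energy = smult kappa (L * L) + bubble * (pderiv L * pderiv L)"

lemma pderiv_energy: "pderiv energy = - (pderiv bubble * pderiv L * pderiv L)"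
proof (rule poly_ext)
  fix x
  let ?M = "pderiv L" and ?N = "pderiv (pderiv L)"
  have ode: "kappa * poly L x =
      - (poly (pderiv bubble) x * poly ?M x + poly bubble x * poly ?N x)"
    using arg_cong[OF legendre_ode, of "\<lambda>p. poly p x"] by (simp add: pderiv_mult algebra_simps)
  have "poly (pderiv energy) x = 2 * poly ?M x * (kappa * poly L x)
      + poly (pderiv bubble) x * poly ?M x * poly ?M x + 2 * poly bubble x * poly ?M x * poly ?N x"
    unfolding energy_def by (simp add: pderiv_mult pderiv_add pderiv_smult algebra_simps)
  also have "\<dots> = poly (- (pderiv bubble * ?M * ?M)) x" unfolding ode by (simp add: algebra_simps)
  finally show "poly (pderiv energy) x = poly (- (pderiv bubble * ?M * ?M)) x" .
qed

lemma energy_le_endpoints: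
  assumes t: "t \<in> {a..b}"
  shows "poly energy t \<le> max (poly energy a) (poly energy b)"
proof -
  have energy': "poly (pderiv energy) x = (2 * x - a - b) * (poly (pderiv L) x)\<^sup>2" for x
    by (simp add: pderiv_energy bubble_def pderiv_pCons power2_eq_square algebra_simps)
  show ?thesis
  proof (cases "t \<le> (a + b) / 2")
    case True
    have "poly energy t \<le> poly energy a"
    proof (rule DERIV_nonpos_imp_nonincreasing[of a t])
      fix x assume "a \<le> x" "x \<le> t"
      then have "poly (pderiv energy) x \<le> 0"
        using True energy'[of x] by (simp add: mult_nonpos_nonneg)
      then show "\<exists>y. DERIV (poly energy) x :> y \<and> y \<le> 0" using poly_DERIV by blast
    qed (use t in simp)
    then show ?thesis by simp
  next
    case False
    have "poly energy t \<le> poly energy b"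
    proof (rule DERIV_nonneg_imp_nondecreasing[of t b])
      fix x assume "t \<le> x" "x \<le> b"
      then have "poly (pderiv energy) x \<ge> 0" using False energy'[of x] by simp
      then show "\<exists>y. DERIV (poly energy) x :> y \<and> y \<ge> 0" using poly_DERIV by blast
    qed (use t in simp)
    then show ?thesis by simp
  qed
qed

lemma legendre_reflect: "poly L a = (-1) ^ q * poly L b"
proof (cases "L = 0")
  case False
  let ?r = "[:a + b, -1:] :: real poly"
  define L' where "L' = pcompose L ?r"
  have "orth_below q L'" unfolding orth_below_def
  proof (intro allI impI)
    fix r :: "real poly" assume r: "degree r < q"
    have "pcompose (pcompose r ?r) ?r = r"
      by (simp add: pcompose_assoc[symmetric] pcompose_pCons)
    then have "L' * r = pcompose (L * pcompose r ?r) ?r"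
      unfolding L'_def by (simp add: pcompose_mult)
    then show "Ipoly (L' * r) = 0" using r by (simp add: Ipoly_reflect orth_L_degree_less degree_pcompose)
  qed
  moreover have "degree L' = q" unfolding L'_def by (simp add: degree_pcompose degree_L_eq False)
  moreover have "coeff L' q = (-1) ^ q * coeff L q"
    using lead_coeff_comp[of ?r L] degree_L_eq[OF False] calculation(2) unfolding L'_def by simp
  ultimately have "L' = smult ((-1) ^ q) L"
    using degree_L orth_below_smult[OF orth_L] by (intro orth_below_unique) auto
  then have "poly L' b = (-1) ^ q * poly L b" by simp
  then show ?thesis unfolding L'_def by (simp add: poly_pcompose)
qed simp

lemma legendre_endpoints_sq: "(poly L a)\<^sup>2 = (poly L b)\<^sup>2"
  using legendre_reflect by (simp add: power_mult_distrib flip: power_mult)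

text \<open>The norm identity \<open>\<integral> L\<^sup>2 = (b - a) L(b)\<^sup>2 / (2q + 1)\<close>: the polynomial
  \<open>(t - (a+b)/2) L' - q L\<close> has degree below \<open>q\<close>, so integrating
  \<open>((t - (a+b)/2) L\<^sup>2)'\<close> against it leaves only the multiple \<open>2q + 1\<close> of \<open>L\<^sup>2\<close>.\<close>

lemma legendre_norm_eq: "(2 * real q + 1) * Ipoly (L * L) = (b - a) * (poly L b)\<^sup>2"
proof -
  let ?s = "[:-(a + b) / 2, 1:] :: real poly"
  define E where "E = ?s * pderiv L - smult (real q) L"
  have "degree E \<le> q"
  proof -
    have "degree (?s * pderiv L) \<le> 1 + (q - 1)"
      using degree_mult_le[of ?s "pderiv L"] degree_L by (simp add: degree_pderiv)
    then have "degree (?s * pderiv L) \<le> q" using q_pos by simp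
    then show ?thesis unfolding E_def using degree_L
      by (meson degree_diff_le degree_smult_le le_trans)
  qed
  moreover have "coeff E q = 0"
  proof -
    obtain q' where q': "q = Suc q'" using q_pos by (cases q) auto
    have "coeff L (Suc q) = 0" using degree_L by (simp add: coeff_eq_0)
    then show ?thesis unfolding E_def q' by (simp add: coeff_pderiv algebra_simps)
  qed
  ultimately have "Ipoly (L * E) = 0"
    by (metis Ipoly_0 le_neq_implies_less leading_coeff_0_iff mult_zero_right orth_L_degree_less)
  moreover have "pderiv (?s * (L * L)) = smult (2 * real q + 1) (L * L) + smult 2 (L * E)"
    by (rule poly_ext)
       (simp add: E_def pderiv_mult pderiv_pCons pderiv_add pderiv_smult algebra_simps)
  ultimately have "Ipoly (pderiv (?s * (L * L))) = (2 * real q + 1) * Ipoly (L * L)"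
    by (simp add: Ipoly_add Ipoly_smult)
  moreover have "Ipoly (pderiv (?s * (L * L))) = (b - a) * (poly L b)\<^sup>2"
    using Ipoly_pderiv[of "?s * (L * L)"] legendre_endpoints_sq
    by (simp add: power2_eq_square algebra_simps)
  ultimately show ?thesis by simp
qed

definition antideriv :: "real poly" where "antideriv = smult (- 1 / kappa) (bubble * pderiv L)"

lemma pderiv_antideriv: "pderiv antideriv = L"
  unfolding antideriv_def using kappa_pos by (simp add: pderiv_smult pderiv_minus legendre_ode)

lemma antideriv_endpoints [simp]: "poly antideriv a = 0" "poly antideriv b = 0"
  by (simp_all add: antideriv_def)

lemma integral_legendre: "t \<in> {a..b} \<Longrightarrow> integral {a..t} (poly L) = poly antideriv t"
  using integral_poly_pderiv[of a t antideriv] unfolding pderiv_antideriv by simp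

lemma antideriv_orth:
  assumes "j + 2 \<le> q"
  shows "integral {a..b} (\<lambda>t. poly antideriv t * t ^ j) = 0"
proof -
  let ?m = "monom (1 / real (Suc j)) (Suc j)"
  have "integral {a..b} (\<lambda>t. poly antideriv t * t ^ j) = Ipoly (antideriv * monom 1 j)"
    unfolding Ipoly_def by (rule integral_cong) (simp add: poly_monom)
  also have "\<dots> = Ipoly (pderiv ?m * antideriv)"
    by (simp add: pderiv_monom mult.commute del: of_nat_Suc)
  also have "\<dots> = - Ipoly (?m * L)"
    using Ipoly_by_parts[of ?m antideriv] by (simp add: pderiv_antideriv)
  also have "Ipoly (?m * L) = 0"
    using orth_L_degree_less[of ?m] assms by (simp add: degree_monom_eq mult.commute)
  finally show ?thesis by simp
qed

lemma abs_antideriv_le: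
  assumes t: "t \<in> {a..b}"
  shows "\<bar>poly antideriv t\<bar> \<le> integral {a..b} (\<lambda>s. \<bar>poly L s\<bar>)"
proof -
  have int: "(\<lambda>s. \<bar>poly L s\<bar>) integrable_on {a..t}" "(\<lambda>s. \<bar>poly L s\<bar>) integrable_on {a..b}"
    by (intro integrable_continuous_interval continuous_intros)+
  have "\<bar>integral {a..t} (poly L)\<bar> \<le> integral {a..t} (\<lambda>s. \<bar>poly L s\<bar>)"
    using integral_norm_bound_integral[OF integrable_on_poly[of L a t] int(1)] by simp
  also have "\<dots> \<le> integral {a..b} (\<lambda>s. \<bar>poly L s\<bar>)"
    by (rule integral_subset_le[OF _ int]) (use t in auto)
  finally show ?thesis using integral_legendre[OF t] by simp
qed

lemma Ipoly_square_nonneg: "0 \<le> Ipoly (L * L)"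
  unfolding Ipoly_def by (rule integral_nonneg) (auto intro: integrable_on_poly)

text \<open>With \<open>antideriv = - bubble L' / kappa\<close>, the energy bound gives
  \<open>bubble L'\<^sup>2 \<le> kappa L(b)\<^sup>2\<close>, and \<open>bubble \<le> (b - a)\<^sup>2 / 4\<close>.\<close>

lemma antideriv_sq_le:
  assumes t: "t \<in> {a..b}"
  shows "(poly antideriv t)\<^sup>2 \<le> (2 * real q + 1) / (4 * kappa) * ((b - a) * Ipoly (L * L))"
proof -
  let ?W = "poly bubble t" and ?M = "poly (pderiv L) t"
  have "poly energy t = kappa * (poly L t)\<^sup>2 + ?W * ?M\<^sup>2"
    by (simp add: energy_def power2_eq_square)
  moreover have "poly energy t \<le> kappa * (poly L b)\<^sup>2"
    using energy_le_endpoints[OF t] legendre_endpoints_sq by (simp add: energy_def power2_eq_square)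
  ultimately have WM: "?W * ?M\<^sup>2 \<le> kappa * (poly L b)\<^sup>2"
    using kappa_pos by (smt (verit) mult_nonneg_nonneg zero_le_power2)
  have "(poly antideriv t)\<^sup>2 = ?W * (?W * ?M\<^sup>2) / kappa\<^sup>2"
    by (simp add: antideriv_def power2_eq_square field_simps)
  also have "\<dots> \<le> ?W * (kappa * (poly L b)\<^sup>2) / kappa\<^sup>2"
    using kappa_pos bubble_bounds[OF t] WM by (intro divide_right_mono mult_left_mono) auto
  also have "\<dots> = ?W * (poly L b)\<^sup>2 / kappa" using kappa_pos by (simp add: power2_eq_square)
  also have "\<dots> \<le> (b - a)\<^sup>2 / 4 * (poly L b)\<^sup>2 / kappa"
    using kappa_pos bubble_bounds[OF t] by (intro divide_right_mono mult_right_mono) auto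
  also have "\<dots> = (b - a) * ((b - a) * (poly L b)\<^sup>2) / (4 * kappa)"
    by (simp add: power2_eq_square)
  also have "\<dots> = (b - a) * ((2 * real q + 1) * Ipoly (L * L)) / (4 * kappa)"
    using legendre_norm_eq by simp
  also have "\<dots> = (2 * real q + 1) / (4 * kappa) * ((b - a) * Ipoly (L * L))"
    using kappa_pos by (simp add: field_simps)
  finally show ?thesis .
qed

text \<open>For \<open>q = 1\<close> the general bound only gives the constant \<open>3/8 > 1/\<pi>\<close>; here
  \<open>antideriv = - c\<^sub>1 bubble / 2\<close> is explicit and yields \<open>3/16\<close>.\<close>

lemma antideriv_sq_le_linear:
  assumes q1: "q = 1" and t: "t \<in> {a..b}"
  shows "(poly antideriv t)\<^sup>2 \<le> 3 / 16 * ((b - a) * Ipoly (L * L))"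
proof -
  define c0 c1 where "c0 = coeff L 0" and "c1 = coeff L 1"
  have L: "L = [:c0, c1:]"
    unfolding c0_def c1_def
    by (rule poly_eqI) (use degree_L q1 in \<open>auto simp: coeff_eq_0 coeff_pCons split: nat.split\<close>)
  have "kappa = 2" unfolding kappa_def using q1 by simp
  have "c0 + c1 * a = - (c0 + c1 * b)" using legendre_reflect q1 L by (simp add: algebra_simps)
  then have Lb: "poly L b = c1 * (b - a) / 2" by (subst L) (simp add: field_simps)
  have "3 * Ipoly (L * L) = (b - a) * (c1 * (b - a) / 2)\<^sup>2"
    using legendre_norm_eq q1 unfolding Lb by simp
  then have I: "Ipoly (L * L) = (b - a) * (c1 * (b - a) / 2)\<^sup>2 / 3" by simp
  have norm: "(b - a) * Ipoly (L * L) = (b - a) ^ 4 * c1\<^sup>2 / 12"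
    unfolding I by (simp add: power2_eq_square power4_eq_xxxx field_simps)
  have "poly antideriv t = - (poly bubble t * c1) / 2"
    unfolding antideriv_def \<open>kappa = 2\<close> by (subst L) (simp add: pderiv_pCons)
  then have "(poly antideriv t)\<^sup>2 = (poly bubble t)\<^sup>2 * c1\<^sup>2 / 4"
    by (simp add: power2_eq_square)
  also have "\<dots> \<le> ((b - a)\<^sup>2 / 4)\<^sup>2 * c1\<^sup>2 / 4"
    using bubble_bounds[OF t] by (intro divide_right_mono mult_right_mono power_mono) auto
  also have "\<dots> = 3 / 16 * ((b - a) ^ 4 * c1\<^sup>2 / 12)"
    by (simp add: power2_eq_square power4_eq_xxxx)
  finally show ?thesis unfolding norm .
qed

end

lemma Cqstar_ge:
  assumes "q \<ge> 2"
  shows "(2 * real q + 1) / (4 * real (q * (q + 1))) \<le> Cqstar q"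
proof -
  define s where "s = sqrt (real (q - 1) * real q)"
  have "0 < s" using assms unfolding s_def by simp
  have "s \<le> sqrt (real q * real q)"
    unfolding s_def using assms by (intro real_sqrt_le_mono mult_right_mono) auto
  then have "s \<le> real q" by simp
  then have "(2 * real q + 1) * s \<le> (2 * real q + 1) * real q" by (intro mult_left_mono) auto
  also have "\<dots> \<le> 2 * real q * (real q + 1)" by (simp add: algebra_simps)
  finally have "(2 * real q + 1) * (2 * s) \<le> 4 * (real q * (real q + 1))" by (simp add: algebra_simps)
  moreover have "0 < real q * (real q + 1)" using assms by simp
  moreover have Cq: "Cqstar q = 1 / (2 * s)" using assms unfolding Cqstar_def s_def by simp
  ultimately show ?thesis
    unfolding Cq using \<open>0 < s\<close> by (simp add: field_simps)
qed

context legendre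
begin

lemma antideriv_sq_le_Cqstar:
  assumes t: "t \<in> {a..b}"
  shows "(poly antideriv t)\<^sup>2 \<le> Cqstar q * ((b - a) * Ipoly (L * L))"
proof -
  have nonneg: "0 \<le> (b - a) * Ipoly (L * L)"
    using a_less_b Ipoly_square_nonneg by simp
  show ?thesis
  proof (cases "q = 1")
    case True
    have "3 / 16 \<le> Cqstar q" using True pi_less_4 pi_gt_zero by (simp add: Cqstar_def field_simps)
    then show ?thesis
      using antideriv_sq_le_linear[OF True t] nonneg by (meson mult_right_mono order_trans)
  next
    case False
    then have "(2 * real q + 1) / (4 * kappa) \<le> Cqstar q"
      using Cqstar_ge q_pos unfolding kappa_def by simp
    then show ?thesis
      using antideriv_sq_le[OF t] nonneg by (meson mult_right_mono order_trans)
  qed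
qed

end

section \<open>Time partitions and piecewise polynomials in time\<close>

lemma time_partition_mono:
  assumes "time_partition tn N T" "i \<le> j" "j \<le> N"
  shows "tn i \<le> tn j"
  using assms(2,3)
proof (induction j)
  case (Suc j)
  show ?case
  proof (cases "i = Suc j")
    case False
    then have "tn i \<le> tn j" using Suc by simp
    also have "tn j < tn (Suc j)" using assms(1) Suc.prems unfolding time_partition_def by auto
    finally show ?thesis by simp
  qed simp
qed simp

lemma time_partition_subinterval:
  assumes P: "time_partition tn N T" and n: "n \<in> {1..N}"
  shows "tn (n - 1) < tn n" "0 \<le> tn (n - 1)" "tn n \<le> T"
proof -
  have "n - 1 < N" using n by auto
  then have "tn (n - 1) < tn (Suc (n - 1))" using P unfolding time_partition_def by blast
  then show "tn (n - 1) < tn n" using n by simp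
  show "0 \<le> tn (n - 1)" using time_partition_mono[OF P, of 0 "n - 1"] n P
    by (auto simp: time_partition_def)
  show "tn n \<le> T" using time_partition_mono[OF P, of n N] n P by (auto simp: time_partition_def)
qed

lemma time_partition_cover:
  assumes P: "time_partition tn N T" and t: "t \<in> {0..T}"
  obtains n where "n \<in> {1..N}" "t \<in> {tn (n - 1)..tn n}"
proof -
  have N1: "N \<ge> 1" and t0: "tn 0 = 0" and tN: "tn N = T" using P unfolding time_partition_def by auto
  define n where "n = (LEAST n. t \<le> tn n)"
  have tn: "t \<le> tn n" unfolding n_def by (rule LeastI[of _ N]) (use t tN in auto)
  have nN: "n \<le> N" unfolding n_def by (rule Least_le) (use t tN in auto)
  show ?thesis
  proof (cases "n = 0")
    case True
    then show ?thesis
      using that[of 1] tn t t0 N1 time_partition_mono[OF P, of 0 1] by auto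
  next
    case False
    then have "\<not> t \<le> tn (n - 1)" using not_less_Least[of "n - 1" "\<lambda>n. t \<le> tn n"] n_def by simp
    then show ?thesis using that[of n] False nN tn by auto
  qed
qed

lemma time_partition_disjoint:
  assumes P: "time_partition tn N T" and "n \<in> {1..N}" "n' \<in> {1..N}" "n \<noteq> n'"
    and t: "t \<in> {tn (n' - 1)<..<tn n'}"
  shows "t \<notin> {tn (n - 1)<..<tn n}"
proof (cases "n' < n")
  case True
  then have "tn n' \<le> tn (n - 1)" using time_partition_mono[OF P, of n' "n - 1"] assms(2) by simp
  then show ?thesis using t by auto
next
  case False
  then have "tn n \<le> tn (n' - 1)" using time_partition_mono[OF P, of n "n' - 1"] assms(2-4) by simp
  then show ?thesis using t by auto
qed

lemma continuous_on_piecewise_poly: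
  fixes v :: "real \<Rightarrow> real"
  assumes P: "time_partition tn N T"
    and V: "\<And>n t. n \<in> {1..N} \<Longrightarrow> t \<in> {tn (n - 1)..tn n} \<Longrightarrow> v t = poly (Q n) t"
  shows "continuous_on {0..T} v"
proof -
  have "{0..T} = (\<Union>n\<in>{1..N}. {tn (n - 1)..tn n})"
  proof
    show "{0..T} \<subseteq> (\<Union>n\<in>{1..N}. {tn (n - 1)..tn n})"
    proof
      fix t assume "t \<in> {0..T}"
      then obtain n where "n \<in> {1..N}" "t \<in> {tn (n - 1)..tn n}" by (rule time_partition_cover[OF P])
      then show "t \<in> (\<Union>n\<in>{1..N}. {tn (n - 1)..tn n})" by blast
    qed
    show "(\<Union>n\<in>{1..N}. {tn (n - 1)..tn n}) \<subseteq> {0..T}"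
    proof
      fix t assume "t \<in> (\<Union>n\<in>{1..N}. {tn (n - 1)..tn n})"
      then obtain n where "n \<in> {1..N}" "t \<in> {tn (n - 1)..tn n}" by blast
      then show "t \<in> {0..T}" using time_partition_subinterval[OF P, of n] by auto
    qed
  qed
  moreover have "continuous_on {tn (n - 1)..tn n} v" if "n \<in> {1..N}" for n
  proof -
    have "continuous_on {tn (n - 1)..tn n} (poly (Q n))" by (intro continuous_intros)
    then show ?thesis by (rule continuous_on_eq) (use V[OF that] in auto)
  qed
  ultimately show ?thesis by (auto intro: continuous_on_closed_Union)
qed

lemma set_integral_Ioo_eq_integral:
  fixes f :: "real \<Rightarrow> real"
  assumes "continuous_on {a..b} f"
  shows "set_integrable lborel {a<..<b} f" "(LINT t:{a<..<b}|lborel. f t) = integral {a..b} f"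
proof -
  show si: "set_integrable lborel {a<..<b} f"
    by (rule set_integrable_subset[OF borel_integrable_atLeastAtMost'[OF assms]]) auto
  show "(LINT t:{a<..<b}|lborel. f t) = integral {a..b} f"
    using set_borel_integral_eq_integral(2)[OF si] integral_open_interval_real[of a b f] by simp
qed

lemma set_integrable_continuous_bounded:
  fixes f :: "'a::euclidean_space \<Rightarrow> real"
  assumes "bounded \<Omega>" "open \<Omega>" "continuous_on UNIV f"
  shows "set_integrable lborel \<Omega> f"
proof -
  have "set_integrable lborel (closure \<Omega>) f"
    unfolding set_integrable_def
    by (rule borel_integrable_compact) (use assms compact_closure continuous_on_subset in auto)
  then show ?thesis by (rule set_integrable_subset) (use assms closure_subset in auto)
qed

lemma set_integral_sum:
  fixes f :: "'i \<Rightarrow> 'a::euclidean_space \<Rightarrow> real"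
  assumes "finite I" "\<And>i. i \<in> I \<Longrightarrow> set_integrable lborel A (f i)"
  shows "(LINT x:A|lborel. (\<Sum>i\<in>I. f i x)) = (\<Sum>i\<in>I. LINT x:A|lborel. f i x)"
proof -
  have "(\<lambda>x. indicator A x *\<^sub>R (\<Sum>i\<in>I. f i x)) = (\<lambda>x. \<Sum>i\<in>I. indicator A x *\<^sub>R f i x)"
    by (rule ext) (rule scaleR_sum_right)
  then show ?thesis unfolding set_lebesgue_integral_def
    by (simp only:) (rule Bochner_Integration.integral_sum, use assms in \<open>auto simp: set_integrable_def\<close>)
qed

lemma grad_0: "grad (\<lambda>y. 0) x = (0 :: 'a::euclidean_space)"
proof -
  have "frechet_derivative (\<lambda>y::'a. 0::real) (at x) = (\<lambda>h. 0)"
    by (rule frechet_derivative_at[symmetric]) simp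
  then show ?thesis unfolding grad_def by simp
qed

definition time_poly :: "nat \<Rightarrow> (nat \<Rightarrow> 'a \<Rightarrow> real) \<Rightarrow> 'a \<Rightarrow> real poly" where
  "time_poly q \<phi> x = (\<Sum>j\<le>q. monom (\<phi> j x) j)"

lemma coeff_time_poly: "coeff (time_poly q \<phi> x) k = (if k \<le> q then \<phi> k x else 0)"
  unfolding time_poly_def by (simp add: coeff_sum coeff_monom)

lemma poly_time_poly: "poly (time_poly q \<phi> x) t = (\<Sum>j\<le>q. t ^ j * \<phi> j x)"
  unfolding time_poly_def by (simp add: poly_sum poly_monom mult.commute)

lemma degree_time_poly: "degree (time_poly q \<phi> x) \<le> q"
  unfolding time_poly_def
  by (intro degree_sum_le) (auto intro: le_trans[OF degree_monom_le])

lemma Vht_imp_time_poly: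
  assumes "u \<in> Vht \<Omega> Th p tn N q"
  obtains \<phi> where "\<And>n j. n \<in> {1..N} \<Longrightarrow> j \<le> q \<Longrightarrow> \<phi> n j \<in> Vh0 \<Omega> Th p"
    "\<And>n t x. n \<in> {1..N} \<Longrightarrow> t \<in> {tn (n - 1)..tn n} \<Longrightarrow> u x t = poly (time_poly q (\<phi> n) x) t"
proof -
  have "\<forall>n\<in>{1..N}. \<exists>\<phi>. (\<forall>j\<le>q. \<phi> j \<in> Vh0 \<Omega> Th p) \<and>
      (\<forall>t\<in>{tn (n - 1)..tn n}. \<forall>x. u x t = (\<Sum>j\<le>q. t ^ j * \<phi> j x))"
    using assms by (simp add: Vht_def)
  from bchoice[OF this] obtain \<phi> where \<phi>: "\<forall>n\<in>{1..N}. (\<forall>j\<le>q. \<phi> n j \<in> Vh0 \<Omega> Th p) \<and>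
      (\<forall>t\<in>{tn (n - 1)..tn n}. \<forall>x. u x t = (\<Sum>j\<le>q. t ^ j * \<phi> n j x))" ..
  show ?thesis
  proof (rule that)
    show "\<phi> n j \<in> Vh0 \<Omega> Th p" if "n \<in> {1..N}" "j \<le> q" for n j
      using \<phi> that by blast
    show "u x t = poly (time_poly q (\<phi> n) x) t" if "n \<in> {1..N}" "t \<in> {tn (n - 1)..tn n}" for n t x
      using \<phi> that unfolding poly_time_poly by blast
  qed
qed

lemma poly_eq_sum_coeff:
  fixes P :: "real poly"
  assumes "degree P \<le> q" shows "poly P t = (\<Sum>k\<le>q. coeff P k * t ^ k)"
proof -
  have "poly P t = poly (\<Sum>i\<le>q. monom (coeff P i) i) t" using poly_as_sum_of_monoms'[OF assms] by simp
  also have "\<dots> = (\<Sum>k\<le>q. coeff P k * t ^ k)" by (simp add: poly_sum poly_monom)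
  finally show ?thesis .
qed

context poly_interval
begin

lemma set_integral_moment:
  assumes "\<forall>r\<in>{a<..<b}. g r = poly G r"
  shows "(LINT r:{a<..<b}|lborel. (g r - poly P r) * r ^ j) = Ipoly ((G - P) * monom 1 j)"
proof -
  have "(LINT r:{a<..<b}|lborel. (g r - poly P r) * r ^ j) =
      (LINT r:{a<..<b}|lborel. poly ((G - P) * monom 1 j) r)"
    by (rule set_lebesgue_integral_cong) (use assms in \<open>auto simp: poly_monom\<close>)
  also have "\<dots> = Ipoly ((G - P) * monom 1 j)"
    unfolding Ipoly_def by (rule set_integral_Ioo_eq_integral(2)) (intro continuous_intros)
  finally show ?thesis .
qed

text \<open>\<open>tproj\<close> is defined by a description; the projection is identified through the
  uniqueness of the degree \<open>q - 1\<close> polynomial with the required moments.\<close>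

lemma tproj_eq:
  assumes q: "q \<ge> 1" and g: "\<forall>r\<in>{a<..<b}. g r = poly G r"
    and P: "degree P \<le> q - 1" and orth: "orth_below q (G - P)"
  shows "tproj (q - 1) a b g = poly P"
proof -
  have moment: "(LINT r:{a<..<b}|lborel. (g r - poly P' r) * r ^ j) = 0 \<longleftrightarrow>
      Ipoly ((G - P') * monom 1 j) = 0" for P' j
    using set_integral_moment[OF g] by simp
  have "(THE P'. degree P' \<le> q - 1 \<and>
      (\<forall>j\<le>q - 1. (LINT r:{a<..<b}|lborel. (g r - poly P' r) * r ^ j) = 0)) = P"
  proof (rule the_equality)
    show "degree P \<le> q - 1 \<and> (\<forall>j\<le>q - 1. (LINT r:{a<..<b}|lborel. (g r - poly P r) * r ^ j) = 0)"
      using orth P q unfolding moment orth_below_def by (auto simp: degree_monom_eq)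
  next
    fix P' assume P': "degree P' \<le> q - 1 \<and>
      (\<forall>j\<le>q - 1. (LINT r:{a<..<b}|lborel. (g r - poly P' r) * r ^ j) = 0)"
    have "orth_below q (P - P')"
    proof (rule orth_belowI_monom)
      fix j assume "j < q"
      then have "Ipoly ((G - P') * monom 1 j) = 0" "Ipoly ((G - P) * monom 1 j) = 0"
        using P' moment orth unfolding orth_below_def by (auto simp: degree_monom_eq)
      moreover have "(P - P') * monom 1 j = (G - P') * monom 1 j - (G - P) * monom 1 j"
        by (simp add: algebra_simps)
      ultimately show "Ipoly ((P - P') * monom 1 j) = 0" by (simp add: Ipoly_diff)
    qed
    moreover have "degree (P - P') < q"
      using P P' q degree_diff_le[of P "q - 1" P'] by linarith
    ultimately show "P' = P" using orth_below_degree_less_eq_0 by fastforce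
  qed
  then show ?thesis unfolding tproj_def[abs_def] by simp
qed

lemma orth_below_family_legendre:
  assumes q: "q \<ge> 1" and E: "\<And>x. orth_below q (E x)" "\<And>x. degree (E x) \<le> q"
  obtains L C where "legendre a b q L" "\<And>x. E x = smult (C * coeff (E x) q) L"
proof (cases "\<exists>x0. E x0 \<noteq> 0")
  case True
  then obtain x0 where x0: "E x0 \<noteq> 0" by blast
  then have "coeff (E x0) q \<noteq> 0" using E orth_below_degree_less_eq_0
    by (metis le_neq_implies_less leading_coeff_0_iff)
  then have "E x = smult (1 / coeff (E x0) q * coeff (E x) q) (E x0)" for x
    using E by (intro orth_below_unique orth_below_smult) auto
  moreover have "legendre a b q (E x0)" by unfold_locales (use a_less_b q E in auto)
  ultimately show ?thesis using that by blast
next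
  case False
  have "legendre a b q 0" by unfold_locales (use a_less_b q in \<open>auto simp: orth_below_def Ipoly_0\<close>)
  then show ?thesis using False that[of 0 0] by auto
qed

end

section \<open>The first equation forces Legendre-type defects\<close>

lemma Vh0_coeff_time_poly:
  assumes "\<forall>j\<le>q. \<phi> j \<in> Vh0 \<Omega> Th p"
  shows "(\<lambda>x. coeff (time_poly q \<phi> x) k) \<in> Vh0 \<Omega> Th p"
proof (cases "k \<le> q")
  case True
  then have "(\<lambda>x. coeff (time_poly q \<phi> x) k) = \<phi> k" by (simp add: coeff_time_poly fun_eq_iff)
  then show ?thesis using assms True by simp
qed (simp add: coeff_time_poly Vh0_0)

lemma Vh0_coeff_pderiv:
  assumes "(\<lambda>x. coeff (P x) (Suc k)) \<in> Vh0 \<Omega> Th p"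
  shows "(\<lambda>x. coeff (pderiv (P x)) k) \<in> Vh0 \<Omega> Th p"
  using Vh0_cmult[OF assms, of "of_nat (Suc k)"] by (simp add: coeff_pderiv)

lemma (in poly_interval) Ipoly_moment:
  assumes "degree P \<le> q"
  shows "Ipoly (P * monom 1 j) = (\<Sum>k\<le>q. coeff P k * integral {a..b} (\<lambda>t. t ^ (k + j)))"
proof -
  have "poly (P * monom 1 j) t = (\<Sum>k\<le>q. coeff P k * t ^ (k + j))" for t
    using poly_eq_sum_coeff[OF assms, of t] by (simp add: poly_monom sum_distrib_left sum_distrib_right power_add mult_ac)
  then have "poly (P * monom 1 j) = (\<lambda>t. \<Sum>k\<le>q. coeff P k * t ^ (k + j))" by (rule ext)
  then show ?thesis
    unfolding Ipoly_def by (simp, subst integral_sum) (auto intro!: integrable_continuous_interval continuous_intros)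
qed

lemma (in poly_interval) Vh0_Ipoly_moment:
  assumes "\<And>x. degree (P x) \<le> q" "\<And>k. k \<le> q \<Longrightarrow> (\<lambda>x. coeff (P x) k) \<in> Vh0 \<Omega> Th p"
  shows "(\<lambda>x. Ipoly (P x * monom 1 j)) \<in> Vh0 \<Omega> Th p"
proof -
  have "(\<lambda>x. Ipoly (P x * monom 1 j)) =
      (\<lambda>x. \<Sum>k\<in>{..q}. integral {a..b} (\<lambda>t. t ^ (k + j)) * coeff (P x) k)"
    using Ipoly_moment[OF assms(1)] by (simp add: mult.commute)
  then show ?thesis
    using Vh0_sum[of "{..q}" "\<lambda>k x. coeff (P x) k" \<Omega> Th p "\<lambda>k. integral {a..b} (\<lambda>t. t ^ (k + j))"]
      assms(2) by simp
qed

lemma Wht_localized_monomial: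
  assumes P: "time_partition tn N T" and n: "n \<in> {1..N}" and j: "j \<le> k" and m: "m \<in> Vh0 \<Omega> Th p"
  shows "(\<lambda>y t. if t \<in> {tn (n - 1)<..<tn n} then t ^ j * m y else 0) \<in> Wht \<Omega> Th p tn N k"
  unfolding Wht_def
proof (intro CollectI ballI)
  fix n' assume n': "n' \<in> {1..N}"
  show "\<exists>\<phi>. (\<forall>i\<le>k. \<phi> i \<in> Vh0 \<Omega> Th p) \<and> (\<forall>t\<in>{tn (n' - 1)<..<tn n'}. \<forall>x.
      (if t \<in> {tn (n - 1)<..<tn n} then t ^ j * m x else 0) = (\<Sum>i\<le>k. t ^ i * \<phi> i x))"
  proof (cases "n' = n")
    case True
    have "(\<Sum>i\<le>k. t ^ i * (if i = j then m x else 0)) = t ^ j * m x" for t x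
      using j by (simp add: if_distrib sum.delta cong: if_cong)
    moreover have "(\<lambda>y. if i = j then m y else 0) \<in> Vh0 \<Omega> Th p" for i
      using m Vh0_0 by (cases "i = j") simp_all
    ultimately show ?thesis
      using True by (intro exI[of _ "\<lambda>i y. if i = j then m y else 0"]) auto
  next
    case False
    then show ?thesis
      using time_partition_disjoint[OF P n n'] Vh0_0 by (intro exI[of _ "\<lambda>i y. 0"]) auto
  qed
qed

lemma dt_eq_poly_pderiv:
  assumes "\<forall>s\<in>{a..b}. u x s = poly U s" and t: "t \<in> {a<..<b}"
  shows "dt u x t = poly (pderiv U) t"
  unfolding dt_def
proof (rule DERIV_imp_deriv)
  show "((\<lambda>r. u x r) has_field_derivative poly (pderiv U) t) (at t)"
    by (rule has_field_derivative_transform_within_open[OF poly_DERIV _ t])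
       (use assms(1) in auto)
qed

context wave_speed
begin

lemma set_integral_stiffness_time_poly:
  assumes P: "\<And>y. degree (P y) \<le> q" "\<And>k. k \<le> q \<Longrightarrow> (\<lambda>y. coeff (P y) k) \<in> Vh0 \<Omega> Th p"
    and m: "m \<in> Vh0 \<Omega> Th p"
  shows "(LINT x:\<Omega>|lborel. (c x)\<^sup>2 * (grad (\<lambda>y. poly (P y) t) x \<bullet> grad (\<lambda>y. t ^ j * m y) x))
    = (\<Sum>k\<le>q. stiffness (\<lambda>y. coeff (P y) k) m * t ^ (k + j))"
proof -
  have "(\<lambda>y. poly (P y) t) = (\<lambda>y. \<Sum>k\<in>{..q}. t ^ k * coeff (P y) k)"
    using poly_eq_sum_coeff[OF P(1)] by (auto simp: mult.commute)
  moreover have "(\<lambda>y. t ^ j * m y) = (\<lambda>y. \<Sum>l\<in>{()}. t ^ j * m y)" by simp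
  moreover have "stiffness (\<lambda>y. \<Sum>k\<in>{..q}. t ^ k * coeff (P y) k) (\<lambda>y. \<Sum>l\<in>{()}. t ^ j * m y)
      = (\<Sum>k\<in>{..q}. \<Sum>l\<in>{()}. t ^ k * t ^ j * stiffness (\<lambda>y. coeff (P y) k) m)"
    using stiffness_lincomb[of "{..q}" "{()}" "\<lambda>k y. coeff (P y) k" "\<lambda>_. m" "\<lambda>k. t ^ k"
        "\<lambda>_. t ^ j"] P m
    by simp
  ultimately show ?thesis
    unfolding set_integral_c_squared stiffness_def by (simp add: power_add mult_ac)
qed

lemma QInt_localized_monomial:
  assumes ab: "0 \<le> a" "a < b" "b \<le> T"
    and P: "\<And>y. degree (P y) \<le> q" "\<And>k. k \<le> q \<Longrightarrow> (\<lambda>y. coeff (P y) k) \<in> Vh0 \<Omega> Th p"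
    and W: "\<forall>t\<in>{a<..<b}. \<forall>y. W y t = poly (P y) t"
    and m: "m \<in> Vh0 \<Omega> Th p"
  shows "QInt \<Omega> 0 T (\<lambda>x t. (c x)\<^sup>2 *
      (grad (\<lambda>y. W y t) x \<bullet> grad (\<lambda>y. if t \<in> {a<..<b} then t ^ j * m y else 0) x))
    = stiffness (\<lambda>y. poly_interval.Ipoly a b (P y * monom 1 j)) m"
proof -
  interpret poly_interval a b using ab by unfold_locales
  define \<mu> where "\<mu> i = integral {a..b} (\<lambda>t. t ^ i)" for i
  define g where "g t = (\<Sum>k\<le>q. stiffness (\<lambda>y. coeff (P y) k) m * t ^ (k + j))" for t
  have inner: "(LINT x:\<Omega>|lborel. (c x)\<^sup>2 *
      (grad (\<lambda>y. W y t) x \<bullet> grad (\<lambda>y. if t \<in> {a<..<b} then t ^ j * m y else 0) x))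
      = indicator {a<..<b} t * g t" for t
  proof (cases "t \<in> {a<..<b}")
    case True
    then have "(\<lambda>y. W y t) = (\<lambda>y. poly (P y) t)"
      "(\<lambda>y. if t \<in> {a<..<b} then t ^ j * m y else 0) = (\<lambda>y. t ^ j * m y)"
      using W by auto
    then show ?thesis
      using True set_integral_stiffness_time_poly[OF P m] unfolding g_def by simp
  next
    case False
    then have "(\<lambda>y. if t \<in> {a<..<b} then t ^ j * m y else 0) = (\<lambda>y. 0)" by auto
    then show ?thesis using False by (simp add: grad_0)
  qed
  have "QInt \<Omega> 0 T (\<lambda>x t. (c x)\<^sup>2 *
      (grad (\<lambda>y. W y t) x \<bullet> grad (\<lambda>y. if t \<in> {a<..<b} then t ^ j * m y else 0) x))
      = (LINT t:{0<..<T}|lborel. indicator {a<..<b} t * g t)"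
    unfolding QInt_def inner ..
  also have "\<dots> = (LINT t:{a<..<b}|lborel. g t)"
    unfolding set_lebesgue_integral_def
    by (rule Bochner_Integration.integral_cong) (use ab in \<open>auto simp: indicator_def\<close>)
  also have "\<dots> = integral {a..b} g"
    by (rule set_integral_Ioo_eq_integral(2)) (unfold g_def, intro continuous_intros)
  also have "\<dots> = (\<Sum>k\<le>q. \<mu> (k + j) * stiffness (\<lambda>y. coeff (P y) k) m)"
    unfolding g_def \<mu>_def
    by (subst integral_sum) (auto simp: mult.commute intro!: integrable_continuous_interval continuous_intros)
  also have "\<dots> = stiffness (\<lambda>y. Ipoly (P y * monom 1 j)) m"
    using stiffness_lincomb_left[of "{..q}" "\<lambda>k y. coeff (P y) k" m "\<lambda>k. \<mu> (k + j)"] P m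
    by (simp add: Ipoly_moment[OF P(1)] \<mu>_def mult.commute)
  finally show ?thesis .
qed

text \<open>All time moments of order below \<open>q\<close> of the defect \<open>v - \<partial>\<^sub>t u\<close> are tested by the
  first equation against themselves; their stiffness vanishes, hence so do they.\<close>

lemma first_equation_orth_below:
  assumes P: "time_partition tn N T" and n: "n \<in> {1..N}" and q: "q \<ge> 1"
    and U: "\<And>y. degree (U y) \<le> q" "\<And>k. k \<le> Suc q \<Longrightarrow> (\<lambda>y. coeff (U y) k) \<in> Vh0 \<Omega> Th p"
      "\<forall>t\<in>{tn (n - 1)..tn n}. \<forall>y. u y t = poly (U y) t"
    and V: "\<And>y. degree (V y) \<le> q" "\<And>k. k \<le> q \<Longrightarrow> (\<lambda>y. coeff (V y) k) \<in> Vh0 \<Omega> Th p"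
      "\<forall>t\<in>{tn (n - 1)..tn n}. \<forall>y. v y t = poly (V y) t"
    and eq1: "\<forall>z\<in>Wht \<Omega> Th p tn N (q - 1).
       QInt \<Omega> 0 T (\<lambda>x t. (c x)\<^sup>2 * (grad (\<lambda>y. v y t) x \<bullet> grad (\<lambda>y. z y t) x))
     - QInt \<Omega> 0 T (\<lambda>x t. (c x)\<^sup>2 * (grad (\<lambda>y. dt u y t) x \<bullet> grad (\<lambda>y. z y t) x)) = 0"
  shows "poly_interval.orth_below (tn (n - 1)) (tn n) q (V y - pderiv (U y))"
proof -
  let ?a = "tn (n - 1)" and ?b = "tn n"
  note ab = time_partition_subinterval[OF P n]
  interpret poly_interval ?a ?b using ab by unfold_locales
  have dU1: "degree (pderiv (U y)) \<le> q" for y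
    using U(1)[of y] by (simp add: degree_pderiv)
  have dU2: "(\<lambda>y. coeff (pderiv (U y)) k) \<in> Vh0 \<Omega> Th p" if "k \<le> q" for k
    using that by (intro Vh0_coeff_pderiv U(2)) simp
  note dU = dU1 dU2
  have dt_u: "\<forall>t\<in>{?a<..<?b}. \<forall>y. dt u y t = poly (pderiv (U y)) t"
    using U(3) by (auto intro: dt_eq_poly_pderiv)
  have v: "\<forall>t\<in>{?a<..<?b}. \<forall>y. v y t = poly (V y) t"
    using V(3) by auto
  have "Ipoly ((V y - pderiv (U y)) * monom 1 j) = 0" if j: "j < q" for j
  proof -
    define m where "m y = Ipoly ((V y - pderiv (U y)) * monom 1 j)" for y
    have m_eq: "m = (\<lambda>y. Ipoly (V y * monom 1 j) - Ipoly (pderiv (U y) * monom 1 j))"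
      unfolding m_def by (simp only: left_diff_distrib Ipoly_diff)
    have mV: "(\<lambda>y. Ipoly (V y * monom 1 j)) \<in> Vh0 \<Omega> Th p"
      "(\<lambda>y. Ipoly (pderiv (U y) * monom 1 j)) \<in> Vh0 \<Omega> Th p"
      using Vh0_Ipoly_moment[OF V(1,2)] Vh0_Ipoly_moment[OF dU] by blast+
    then have mV0: "m \<in> Vh0 \<Omega> Th p" unfolding m_eq by (rule Vh0_diff)
    have "(\<lambda>y t. if t \<in> {?a<..<?b} then t ^ j * m y else 0) \<in> Wht \<Omega> Th p tn N (q - 1)"
      using Wht_localized_monomial[OF P n _ mV0] j by simp
    from bspec[OF eq1 this]
    have "stiffness (\<lambda>y. Ipoly (V y * monom 1 j)) m
        - stiffness (\<lambda>y. Ipoly (pderiv (U y) * monom 1 j)) m = 0"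
      by (simp only: QInt_localized_monomial[OF ab(2,1,3) V(1,2) v mV0]
          QInt_localized_monomial[OF ab(2,1,3) dU dt_u mV0])
    then have "stiffness m m = 0"
      using stiffness_diff_left[OF mV mV0] m_eq by simp
    from stiffness_self_eq_0D[OF mV0 this, of y] show ?thesis unfolding m_def .
  qed
  then show ?thesis by (rule orth_belowI_monom)
qed

end

section \<open>Representation of \<open>u\<^sup>\<star> - u\<close> and the estimates\<close>

lemma piecewise_poly_increment:
  fixes u v :: "real \<Rightarrow> real"
  assumes P: "time_partition tn N T" and n: "n \<in> {1..N}" and t: "t \<in> {tn (n - 1)..tn n}"
    and U: "\<And>n t. n \<in> {1..N} \<Longrightarrow> t \<in> {tn (n - 1)..tn n} \<Longrightarrow> u t = poly (U n) t"
    and V: "\<And>n t. n \<in> {1..N} \<Longrightarrow> t \<in> {tn (n - 1)..tn n} \<Longrightarrow> v t = poly (V n) t"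
  shows "(integral {0..t} v - u t) - (integral {0..tn (n - 1)} v - u (tn (n - 1)))
       = integral {tn (n - 1)..t} (poly (V n - pderiv (U n)))"
proof -
  let ?a = "tn (n - 1)"
  have "0 \<le> ?a" "?a \<le> t" "t \<le> T" "?a \<le> tn n" using time_partition_subinterval[OF P n] t by auto
  have "v integrable_on {0..t}"
    by (rule integrable_continuous_interval, rule continuous_on_subset)
       (use continuous_on_piecewise_poly[of tn N T v V, OF P V] \<open>t \<le> T\<close> in auto)
  then have "integral {0..?a} v + integral {?a..t} v = integral {0..t} v"
    by (rule Henstock_Kurzweil_Integration.integral_combine[OF \<open>0 \<le> ?a\<close> \<open>?a \<le> t\<close>])
  then have "integral {0..t} v - integral {0..?a} v = integral {?a..t} v" by simp
  also have "\<dots> = integral {?a..t} (poly (V n))"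
    by (rule integral_cong) (use V n t in auto)
  finally have "integral {0..t} v - integral {0..?a} v = integral {?a..t} (poly (V n))" .
  moreover have "u t - u ?a = integral {?a..t} (poly (pderiv (U n)))"
    using integral_poly_pderiv[OF \<open>?a \<le> t\<close>, of "U n"] U[OF n t] U[OF n, of ?a] \<open>?a \<le> tn n\<close>
    by simp
  moreover have "poly (V n - pderiv (U n)) = (\<lambda>r. poly (V n) r - poly (pderiv (U n)) r)"
    by (auto simp: poly_diff)
  ultimately show ?thesis by (simp add: integral_diff integrable_on_poly)
qed

text \<open>If the defect \<open>V - U'\<close> has mean zero on every subinterval, then
  \<open>u(0) + \<integral>\<^sub>0\<^sup>t v - u(t)\<close> vanishes at all nodes.\<close>

lemma piecewise_poly_error:
  fixes u v :: "real \<Rightarrow> real"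
  assumes P: "time_partition tn N T" and n: "n \<in> {1..N}" and t: "t \<in> {tn (n - 1)..tn n}"
    and U: "\<And>n t. n \<in> {1..N} \<Longrightarrow> t \<in> {tn (n - 1)..tn n} \<Longrightarrow> u t = poly (U n) t"
    and V: "\<And>n t. n \<in> {1..N} \<Longrightarrow> t \<in> {tn (n - 1)..tn n} \<Longrightarrow> v t = poly (V n) t"
    and mean0: "\<And>n. n \<in> {1..N} \<Longrightarrow> integral {tn (n - 1)..tn n} (poly (V n - pderiv (U n))) = 0"
  shows "u 0 + integral {0..t} v - u t = integral {tn (n - 1)..t} (poly (V n - pderiv (U n)))"
proof -
  have node: "integral {0..tn m} v - u (tn m) = - u 0" if "m \<le> N" for m
    using that
  proof (induction m)
    case 0
    then show ?case using P by (simp add: time_partition_def)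
  next
    case (Suc m)
    then have m: "Suc m \<in> {1..N}" by simp
    have "tn m \<le> tn (Suc m)" using time_partition_subinterval(1)[OF P m] by simp
    then have "(integral {0..tn (Suc m)} v - u (tn (Suc m))) - (integral {0..tn m} v - u (tn m)) = 0"
      using piecewise_poly_increment[of tn N T "Suc m" "tn (Suc m)" u U v V, OF P m _ U V]
        mean0[OF m] by simp
    then show ?case using Suc by simp
  qed
  have "n - 1 \<le> N" using n by auto
  from node[OF this] have "integral {0..tn (n - 1)} v - u (tn (n - 1)) = - u 0" .
  then show ?thesis
    using piecewise_poly_increment[of tn N T n t u U v V, OF P n t U V] by linarith
qed

lemma L2nrm_mult_right: "L2nrm \<Omega> (\<lambda>x. \<psi> x * r) = \<bar>r\<bar> * L2nrm \<Omega> \<psi>"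
proof -
  have "(LINT x:\<Omega>|lborel. (\<psi> x * r)\<^sup>2) = r\<^sup>2 * (LINT x:\<Omega>|lborel. (\<psi> x)\<^sup>2)"
    by (simp add: power_mult_distrib mult.commute)
  then show ?thesis unfolding L2nrm_def by (simp add: real_sqrt_mult)
qed

lemma set_integral_square_nonneg:
  fixes \<psi> :: "'a::euclidean_space \<Rightarrow> real"
  shows "0 \<le> (LINT x:\<Omega>|lborel. (\<psi> x)\<^sup>2)"
  unfolding set_lebesgue_integral_def by (rule Bochner_Integration.integral_nonneg) simp

lemma L2nrm_nonneg: "0 \<le> L2nrm \<Omega> \<psi>"
  unfolding L2nrm_def using set_integral_square_nonneg by simp

lemma L2nrm_square: "(L2nrm \<Omega> \<psi>)\<^sup>2 = (LINT x:\<Omega>|lborel. (\<psi> x)\<^sup>2)"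
  unfolding L2nrm_def using set_integral_square_nonneg by simp

lemma (in poly_interval) QInt_separated_square:
  assumes d: "\<And>t x. t \<in> {a<..<b} \<Longrightarrow> d x t = \<psi> x * poly P t"
  shows "QInt \<Omega> a b (\<lambda>x t. (d x t)\<^sup>2) = (L2nrm \<Omega> \<psi>)\<^sup>2 * Ipoly (P * P)"
proof -
  have PP: "poly (P * P) = (\<lambda>t. poly P t * poly P t)" by auto
  have "(LINT x:\<Omega>|lborel. (d x t)\<^sup>2) = (L2nrm \<Omega> \<psi>)\<^sup>2 * poly (P * P) t" if "t \<in> {a<..<b}" for t
  proof -
    have "(LINT x:\<Omega>|lborel. (d x t)\<^sup>2) = (LINT x:\<Omega>|lborel. (\<psi> x)\<^sup>2) * (poly P t)\<^sup>2"
      using d[OF that] by (simp add: power_mult_distrib)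
    then show ?thesis unfolding L2nrm_square by (simp add: power2_eq_square)
  qed
  then have "QInt \<Omega> a b (\<lambda>x t. (d x t)\<^sup>2) = (LINT t:{a<..<b}|lborel. (L2nrm \<Omega> \<psi>)\<^sup>2 * poly (P * P) t)"
    unfolding QInt_def by (intro set_lebesgue_integral_cong) auto
  also have "\<dots> = integral {a..b} (\<lambda>t. (L2nrm \<Omega> \<psi>)\<^sup>2 * poly (P * P) t)"
    by (rule set_integral_Ioo_eq_integral(2)) (intro continuous_intros)
  finally show ?thesis unfolding Ipoly_def PP by simp
qed

context legendre
begin

lemma QInt_antideriv_orth:
  assumes \<Omega>: "open \<Omega>" "bounded \<Omega>" and \<psi>: "continuous_on UNIV \<psi>"
    and \<phi>: "\<And>j. j \<le> k \<Longrightarrow> continuous_on UNIV (\<phi> j)" and k: "k + 2 \<le> q"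
    and e: "\<And>t x. t \<in> {a<..<b} \<Longrightarrow> e x t = \<psi> x * poly antideriv t"
  shows "QInt \<Omega> a b (\<lambda>x t. e x t * (\<Sum>j\<le>k. t ^ j * \<phi> j x)) = 0"
proof -
  define M where "M j = (LINT x:\<Omega>|lborel. \<psi> x * \<phi> j x)" for j
  have "(LINT x:\<Omega>|lborel. e x t * (\<Sum>j\<le>k. t ^ j * \<phi> j x))
      = (\<Sum>j\<le>k. M j * (poly antideriv t * t ^ j))" if t: "t \<in> {a<..<b}" for t
  proof -
    have "(LINT x:\<Omega>|lborel. e x t * (\<Sum>j\<le>k. t ^ j * \<phi> j x))
        = (LINT x:\<Omega>|lborel. (\<Sum>j\<le>k. (poly antideriv t * t ^ j) * (\<psi> x * \<phi> j x)))"
      by (rule set_lebesgue_integral_cong) (use \<Omega> e[OF t] in \<open>auto simp: sum_distrib_left mult_ac\<close>)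
    also have "\<dots> = (\<Sum>j\<le>k. LINT x:\<Omega>|lborel. (poly antideriv t * t ^ j) * (\<psi> x * \<phi> j x))"
      by (rule set_integral_sum)
         (auto intro!: set_integrable_continuous_bounded[OF \<Omega>(2,1)] continuous_intros \<psi> \<phi>)
    also have "\<dots> = (\<Sum>j\<le>k. (poly antideriv t * t ^ j) * M j)"
      unfolding M_def by (simp only: set_integral_mult_right)
    finally show ?thesis by (simp add: mult_ac)
  qed
  then have "QInt \<Omega> a b (\<lambda>x t. e x t * (\<Sum>j\<le>k. t ^ j * \<phi> j x))
      = (LINT t:{a<..<b}|lborel. (\<Sum>j\<le>k. M j * (poly antideriv t * t ^ j)))"
    unfolding QInt_def by (intro set_lebesgue_integral_cong) auto
  also have "\<dots> = integral {a..b} (\<lambda>t. \<Sum>j\<le>k. M j * (poly antideriv t * t ^ j))"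
    by (rule set_integral_Ioo_eq_integral(2)) (intro continuous_intros)
  also have "\<dots> = (\<Sum>j\<le>k. M j * integral {a..b} (\<lambda>t. poly antideriv t * t ^ j))"
    by (subst integral_sum) (auto intro!: integrable_continuous_interval continuous_intros)
  also have "\<dots> = 0" using antideriv_orth k by simp
  finally show ?thesis .
qed

lemma esssup_L2nrm_antideriv_le:
  assumes e: "\<And>t x. t \<in> {a<..<b} \<Longrightarrow> e x t = \<psi> x * poly antideriv t"
    and d: "\<And>t x. t \<in> {a<..<b} \<Longrightarrow> d x t = \<psi> x * poly L t"
  shows "esssup (restrict_space lborel {a<..<b}) (\<lambda>t. ereal (L2nrm \<Omega> (\<lambda>x. e x t)))
    \<le> ereal (sqrt (Cqstar q * (b - a)) * sqrt (QInt \<Omega> a b (\<lambda>x t. (d x t)\<^sup>2)))"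
proof -
  let ?N = "L2nrm \<Omega> \<psi>"
  have L2e: "L2nrm \<Omega> (\<lambda>x. e x t) = \<bar>poly antideriv t\<bar> * ?N" if "t \<in> {a<..<b}" for t
    using e[OF that] by (simp add: L2nrm_mult_right)
  have borel: "(\<lambda>t. \<bar>poly antideriv t\<bar> * ?N) \<in> borel_measurable borel"
    by (intro borel_measurable_continuous_onI continuous_intros)
  have "(\<lambda>t. ereal (\<bar>poly antideriv t\<bar> * ?N)) \<in> borel_measurable (restrict_space lborel {a<..<b})"
    by (intro measurable_restrict_space1) (use borel in measurable)
  then have meas: "(\<lambda>t. ereal (L2nrm \<Omega> (\<lambda>x. e x t))) \<in> borel_measurable (restrict_space lborel {a<..<b})"
    by (rule measurable_cong[THEN iffD1, rotated]) (simp add: space_restrict_space L2e)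
  have "\<bar>poly antideriv t\<bar> * ?N \<le> sqrt (Cqstar q * (b - a)) * sqrt (?N\<^sup>2 * Ipoly (L * L))"
    if t: "t \<in> {a..b}" for t
  proof -
    have "\<bar>poly antideriv t\<bar> \<le> sqrt (Cqstar q * ((b - a) * Ipoly (L * L)))"
      using real_sqrt_le_mono[OF antideriv_sq_le_Cqstar[OF t]] by simp
    then have "\<bar>poly antideriv t\<bar> * ?N \<le> sqrt (Cqstar q * ((b - a) * Ipoly (L * L))) * ?N"
      by (rule mult_right_mono) (rule L2nrm_nonneg)
    then show ?thesis using L2nrm_nonneg[of \<Omega> \<psi>] by (simp add: real_sqrt_mult mult_ac)
  qed
  moreover have "QInt \<Omega> a b (\<lambda>x t. (d x t)\<^sup>2) = ?N\<^sup>2 * Ipoly (L * L)"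
    by (rule QInt_separated_square[OF d])
  ultimately show ?thesis
    by (intro esssup_I[OF meas] AE_I2) (auto simp: space_restrict_space L2e)
qed

lemma LINT_L2nrm_antideriv_le:
  assumes e: "\<And>t x. t \<in> {a<..<b} \<Longrightarrow> e x t = \<psi> x * poly antideriv t"
    and d: "\<And>t x. t \<in> {a<..<b} \<Longrightarrow> d x t = \<psi> x * poly L t"
  shows "(LINT t:{a<..<b}|lborel. L2nrm \<Omega> (\<lambda>x. e x t))
    \<le> (b - a) * (LINT t:{a<..<b}|lborel. L2nrm \<Omega> (\<lambda>x. d x t))"
proof -
  let ?N = "L2nrm \<Omega> \<psi>" and ?J = "integral {a..b} (\<lambda>s. \<bar>poly L s\<bar>)"
  have "(LINT t:{a<..<b}|lborel. L2nrm \<Omega> (\<lambda>x. e x t)) = integral {a..b} (\<lambda>t. \<bar>poly antideriv t\<bar> * ?N)"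
  proof -
    have "(LINT t:{a<..<b}|lborel. L2nrm \<Omega> (\<lambda>x. e x t)) = (LINT t:{a<..<b}|lborel. \<bar>poly antideriv t\<bar> * ?N)"
      by (rule set_lebesgue_integral_cong) (auto simp: e L2nrm_mult_right)
    also have "\<dots> = integral {a..b} (\<lambda>t. \<bar>poly antideriv t\<bar> * ?N)"
      by (rule set_integral_Ioo_eq_integral(2)) (intro continuous_intros)
    finally show ?thesis .
  qed
  also have "\<dots> \<le> integral {a..b} (\<lambda>t. ?J * ?N)"
    by (rule integral_le) (auto intro!: integrable_continuous_interval continuous_intros
        mult_right_mono abs_antideriv_le L2nrm_nonneg)
  also have "\<dots> = (b - a) * (?J * ?N)" using a_less_b by simp
  also have "?J * ?N = (LINT t:{a<..<b}|lborel. L2nrm \<Omega> (\<lambda>x. d x t))"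
  proof -
    have "(LINT t:{a<..<b}|lborel. L2nrm \<Omega> (\<lambda>x. d x t)) = (LINT t:{a<..<b}|lborel. \<bar>poly L t\<bar> * ?N)"
      by (rule set_lebesgue_integral_cong) (auto simp: d L2nrm_mult_right)
    also have "\<dots> = integral {a..b} (\<lambda>t. \<bar>poly L t\<bar> * ?N)"
      by (rule set_integral_Ioo_eq_integral(2)) (intro continuous_intros)
    finally show ?thesis by simp
  qed
  finally show ?thesis .
qed

end

lemma (in wave_speed) Vht_defect_orth_below:
  assumes part: "time_partition tn N T" and q: "q \<ge> 1"
    and u_sp: "u \<in> Vht \<Omega> Th p tn N q" and v_sp: "v \<in> Vht \<Omega> Th p tn N q"
    and eq1: "\<forall>z\<in>Wht \<Omega> Th p tn N (q - 1).
       QInt \<Omega> 0 T (\<lambda>x t. (c x)\<^sup>2 * (grad (\<lambda>y. v y t) x \<bullet> grad (\<lambda>y. z y t) x))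
     - QInt \<Omega> 0 T (\<lambda>x t. (c x)\<^sup>2 * (grad (\<lambda>y. dt u y t) x \<bullet> grad (\<lambda>y. z y t) x)) = 0"
  obtains U V where
    "\<And>m t x. m \<in> {1..N} \<Longrightarrow> t \<in> {tn (m - 1)..tn m} \<Longrightarrow> u x t = poly (U m x) t"
    "\<And>m t x. m \<in> {1..N} \<Longrightarrow> t \<in> {tn (m - 1)..tn m} \<Longrightarrow> v x t = poly (V m x) t"
    "\<And>m x. degree (U m x) \<le> q" "\<And>m x. degree (V m x) \<le> q"
    "\<And>m. m \<in> {1..N} \<Longrightarrow> continuous_on UNIV (\<lambda>x. coeff (V m x) q)"
    "\<And>m x. m \<in> {1..N} \<Longrightarrow>
       poly_interval.orth_below (tn (m - 1)) (tn m) q (V m x - pderiv (U m x))"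
proof -
  obtain \<phi>u where \<phi>u: "\<And>n j. n \<in> {1..N} \<Longrightarrow> j \<le> q \<Longrightarrow> \<phi>u n j \<in> Vh0 \<Omega> Th p"
    "\<And>n t x. n \<in> {1..N} \<Longrightarrow> t \<in> {tn (n - 1)..tn n} \<Longrightarrow> u x t = poly (time_poly q (\<phi>u n) x) t"
    by (rule Vht_imp_time_poly[OF u_sp]) blast
  obtain \<phi>v where \<phi>v: "\<And>n j. n \<in> {1..N} \<Longrightarrow> j \<le> q \<Longrightarrow> \<phi>v n j \<in> Vh0 \<Omega> Th p"
    "\<And>n t x. n \<in> {1..N} \<Longrightarrow> t \<in> {tn (n - 1)..tn n} \<Longrightarrow> v x t = poly (time_poly q (\<phi>v n) x) t"
    by (rule Vht_imp_time_poly[OF v_sp]) blast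
  show ?thesis
  proof (rule that[of "\<lambda>m. time_poly q (\<phi>u m)" "\<lambda>m. time_poly q (\<phi>v m)"])
    show "continuous_on UNIV (\<lambda>x. coeff (time_poly q (\<phi>v m) x) q)" if "m \<in> {1..N}" for m
      using Vh0_continuous[OF \<phi>v(1)[OF that order.refl]] by (simp add: coeff_time_poly)
    show "poly_interval.orth_below (tn (m - 1)) (tn m) q
        (time_poly q (\<phi>v m) x - pderiv (time_poly q (\<phi>u m) x))" if m: "m \<in> {1..N}" for m x
      by (rule first_equation_orth_below[OF part m q _ _ _ _ _ _ eq1])
         (use \<phi>u \<phi>v m in \<open>auto intro: degree_time_poly Vh0_coeff_time_poly\<close>)
  qed (use \<phi>u(2) \<phi>v(2) degree_time_poly in auto)
qed

lemma defect_multiple_of_legendre: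
  fixes u v :: "real \<Rightarrow> real"
  assumes part: "time_partition tn N T" and q: "q \<ge> 1" and n: "n \<in> {1..N}"
    and U: "\<And>m t. m \<in> {1..N} \<Longrightarrow> t \<in> {tn (m - 1)..tn m} \<Longrightarrow> u t = poly (U m) t"
    and V: "\<And>m t. m \<in> {1..N} \<Longrightarrow> t \<in> {tn (m - 1)..tn m} \<Longrightarrow> v t = poly (V m) t"
    and degU: "degree (U n) \<le> q"
    and orth: "\<And>m. m \<in> {1..N} \<Longrightarrow> poly_interval.orth_below (tn (m - 1)) (tn m) q (V m - pderiv (U m))"
    and L: "legendre (tn (n - 1)) (tn n) q L" and E: "V n - pderiv (U n) = smult s L"
  shows "t \<in> {tn (n - 1)..tn n} \<Longrightarrow>
      u 0 + integral {0..t} v - u t = s * poly (legendre.antideriv (tn (n - 1)) (tn n) q L) t"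
    and "t \<in> {tn (n - 1)<..<tn n} \<Longrightarrow> v t - tproj (q - 1) (tn (n - 1)) (tn n) v t = s * poly L t"
proof -
  interpret legendre "tn (n - 1)" "tn n" q L by (rule L)
  have mean0: "integral {tn (m - 1)..tn m} (poly (V m - pderiv (U m))) = 0" if m: "m \<in> {1..N}" for m
  proof -
    interpret I: poly_interval "tn (m - 1)" "tn m"
      using time_partition_subinterval[OF part m] by unfold_locales
    have "I.Ipoly ((V m - pderiv (U m)) * 1) = 0"
      using orth[OF m] q unfolding I.orth_below_def by (metis degree_1 less_le_trans zero_less_one)
    then show ?thesis unfolding I.Ipoly_def by simp
  qed
  show "u 0 + integral {0..t} v - u t = s * poly antideriv t" if t: "t \<in> {tn (n - 1)..tn n}"
  proof -
    have "poly (smult s L) = (\<lambda>r. s * poly L r)" by auto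
    then show ?thesis
      using piecewise_poly_error[of tn N T n t u U v V, OF part n t U V mean0] integral_legendre[OF t]
      by (simp add: E)
  qed
  show "v t - tproj (q - 1) (tn (n - 1)) (tn n) v t = s * poly L t" if t: "t \<in> {tn (n - 1)<..<tn n}"
  proof -
    have "tproj (q - 1) (tn (n - 1)) (tn n) v = poly (pderiv (U n))"
      using V[OF n] orth[OF n] degU by (intro tproj_eq[OF q]) (auto simp: degree_pderiv)
    then have "v t - tproj (q - 1) (tn (n - 1)) (tn n) v t = poly (V n - pderiv (U n)) t"
      using V[OF n, of t] t by (simp add: poly_diff)
    then show ?thesis using E by simp
  qed
qed

lemma (in wave_speed) discrete_error_factorization:
  assumes part: "time_partition tn N T" and q: "q \<ge> 1"
    and u_sp: "u \<in> Vht \<Omega> Th p tn N q" and v_sp: "v \<in> Vht \<Omega> Th p tn N q"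
    and eq1: "\<forall>z\<in>Wht \<Omega> Th p tn N (q - 1).
       QInt \<Omega> 0 T (\<lambda>x t. (c x)\<^sup>2 * (grad (\<lambda>y. v y t) x \<bullet> grad (\<lambda>y. z y t) x))
     - QInt \<Omega> 0 T (\<lambda>x t. (c x)\<^sup>2 * (grad (\<lambda>y. dt u y t) x \<bullet> grad (\<lambda>y. z y t) x)) = 0"
    and n: "n \<in> {1..N}"
  obtains L \<psi> where "legendre (tn (n - 1)) (tn n) q L" "continuous_on UNIV \<psi>"
    "\<And>t x. t \<in> {tn (n - 1)..tn n} \<Longrightarrow> u x 0 + integral {0..t} (v x) - u x t
       = \<psi> x * poly (legendre.antideriv (tn (n - 1)) (tn n) q L) t"
    "\<And>t x. t \<in> {tn (n - 1)<..<tn n} \<Longrightarrow>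
       v x t - tproj (q - 1) (tn (n - 1)) (tn n) (\<lambda>r. v x r) t = \<psi> x * poly L t"
proof -
  obtain U V where UV:
    "\<And>m t x. m \<in> {1..N} \<Longrightarrow> t \<in> {tn (m - 1)..tn m} \<Longrightarrow> u x t = poly (U m x) t"
    "\<And>m t x. m \<in> {1..N} \<Longrightarrow> t \<in> {tn (m - 1)..tn m} \<Longrightarrow> v x t = poly (V m x) t"
    "\<And>m x. degree (U m x) \<le> q" "\<And>m x. degree (V m x) \<le> q"
    "\<And>m. m \<in> {1..N} \<Longrightarrow> continuous_on UNIV (\<lambda>x. coeff (V m x) q)"
    and orth: "\<And>m x. m \<in> {1..N} \<Longrightarrow>
       poly_interval.orth_below (tn (m - 1)) (tn m) q (V m x - pderiv (U m x))"
    by (rule Vht_defect_orth_below[OF part q u_sp v_sp eq1]) blast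
  interpret poly_interval "tn (n - 1)" "tn n"
    using time_partition_subinterval[OF part n] by unfold_locales
  have "degree (V n x - pderiv (U n x)) \<le> q" for x
    using UV(3)[of n x] UV(4)[of n x] by (intro degree_diff_le) (auto simp: degree_pderiv)
  then obtain L C where L: "legendre (tn (n - 1)) (tn n) q L"
    and E: "\<And>x. V n x - pderiv (U n x) = smult (C * coeff (V n x - pderiv (U n x)) q) L"
    by (rule orth_below_family_legendre[where E = "\<lambda>x. V n x - pderiv (U n x)", OF q orth[OF n]])
       blast
  have "coeff (pderiv (U n x)) q = 0" for x
    using UV(3)[of n x] by (simp add: coeff_pderiv coeff_eq_0)
  then have E': "V n x - pderiv (U n x) = smult (C * coeff (V n x) q) L" for x
    using E[of x] by simp
  show ?thesis
  proof (rule that[OF L])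
    show "continuous_on UNIV (\<lambda>x. C * coeff (V n x) q)" using UV(5)[OF n] by (intro continuous_intros)
  next
    fix t x
    note defect = defect_multiple_of_legendre[where u = "u x" and v = "v x" and U = "\<lambda>m. U m x"
        and V = "\<lambda>m. V m x", OF part q n UV(1) UV(2) UV(3) orth L E']
    show "t \<in> {tn (n - 1)..tn n} \<Longrightarrow> u x 0 + integral {0..t} (v x) - u x t
        = C * coeff (V n x) q * poly (legendre.antideriv (tn (n - 1)) (tn n) q L) t"
      by (rule defect(1))
    show "t \<in> {tn (n - 1)<..<tn n} \<Longrightarrow>
        v x t - tproj (q - 1) (tn (n - 1)) (tn n) (\<lambda>r. v x r) t = C * coeff (V n x) q * poly L t"
      by (rule defect(2))
  qed
qed

theorem lemma4p13:
  fixes \<Omega> :: "'a::euclidean_space set" and Th :: "'a set set"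
    and c :: "'a \<Rightarrow> real" and c_lo c_hi T :: real
    and f u v ustar :: "'a \<Rightarrow> real \<Rightarrow> real" and u0h v0h :: "'a \<Rightarrow> real"
    and tn :: "nat \<Rightarrow> real" and N p q :: nat
  assumes dim: "DIM('a) \<in> {1, 2, 3}"
    and dom: "polytopic_domain \<Omega>"
    and mesh: "conforming_simplicial_mesh \<Omega> Th"
    and Tpos: "T > 0"
    and c_cont: "continuous_on (closure \<Omega>) c"
    and c_bnd: "0 < c_lo" "\<forall>x\<in>closure \<Omega>. c_lo < c x \<and> c x < c_hi"
    and f_reg: "L1L2 \<Omega> T f"
    and part: "time_partition tn N T"
    and pq: "p \<ge> 1" "q \<ge> 1"
    and u_sp: "u \<in> Vht \<Omega> Th p tn N q"
    and v_sp: "v \<in> Vht \<Omega> Th p tn N q"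
    and eq1: "\<forall>z\<in>Wht \<Omega> Th p tn N (q - 1).
       QInt \<Omega> 0 T (\<lambda>x t. (c x)\<^sup>2 * (grad (\<lambda>y. v y t) x \<bullet> grad (\<lambda>y. z y t) x))
     - QInt \<Omega> 0 T (\<lambda>x t. (c x)\<^sup>2 * (grad (\<lambda>y. dt u y t) x \<bullet> grad (\<lambda>y. z y t) x)) = 0"
    and eq2: "\<forall>w\<in>Wht \<Omega> Th p tn N (q - 1).
       QInt \<Omega> 0 T (\<lambda>x t. dt v x t * w x t)
     + QInt \<Omega> 0 T (\<lambda>x t. (c x)\<^sup>2 * (grad (\<lambda>y. u y t) x \<bullet> grad (\<lambda>y. w y t) x))
     = QInt \<Omega> 0 T (\<lambda>x t. f x t * w x t)"
    and init: "u0h \<in> Vh0 \<Omega> Th p" "v0h \<in> Vh0 \<Omega> Th p"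
              "\<forall>x. u x 0 = u0h x" "\<forall>x. v x 0 = v0h x"
    and ustar_def: "ustar = (\<lambda>x t. u x 0 + integral {0..t} (\<lambda>s. v x s))"
  shows "\<forall>n\<in>{1..N}.
     (q > 1 \<longrightarrow> (\<forall>\<phi>. (\<forall>j\<le>q - 2. \<phi> j \<in> Vh0 \<Omega> Th p) \<longrightarrow>
        QInt \<Omega> (tn (n - 1)) (tn n)
          (\<lambda>x t. (ustar x t - u x t) * (\<Sum>j\<le>q - 2. t ^ j * \<phi> j x)) = 0))
   \<and> esssup (restrict_space lborel {tn (n - 1)<..<tn n})
        (\<lambda>t. ereal (L2nrm \<Omega> (\<lambda>x. ustar x t - u x t)))
      \<le> ereal (sqrt (Cqstar q * (tn n - tn (n - 1)))
           * sqrt (QInt \<Omega> (tn (n - 1)) (tn n)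
               (\<lambda>x t. (v x t - tproj (q - 1) (tn (n - 1)) (tn n) (\<lambda>r. v x r) t)\<^sup>2)))
   \<and> (LINT t:{tn (n - 1)<..<tn n}|lborel. L2nrm \<Omega> (\<lambda>x. ustar x t - u x t))
      \<le> (tn n - tn (n - 1)) *
        (LINT t:{tn (n - 1)<..<tn n}|lborel.
           L2nrm \<Omega> (\<lambda>x. v x t - tproj (q - 1) (tn (n - 1)) (tn n) (\<lambda>r. v x r) t))"
proof -
  interpret wave_speed \<Omega> Th c c_lo c_hi p using dom mesh c_cont c_bnd by unfold_locales
  show ?thesis (is "\<forall>n\<in>{1..N}. ?interval n")
  proof
    fix n assume n: "n \<in> {1..N}"
    obtain L \<psi> where leg: "legendre (tn (n - 1)) (tn n) q L" and \<psi>: "continuous_on UNIV \<psi>"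
      and e: "\<And>t x. t \<in> {tn (n - 1)..tn n} \<Longrightarrow> u x 0 + integral {0..t} (v x) - u x t
        = \<psi> x * poly (legendre.antideriv (tn (n - 1)) (tn n) q L) t"
      and d: "\<And>t x. t \<in> {tn (n - 1)<..<tn n} \<Longrightarrow>
        v x t - tproj (q - 1) (tn (n - 1)) (tn n) (\<lambda>r. v x r) t = \<psi> x * poly L t"
      by (rule discrete_error_factorization[OF part pq(2) u_sp v_sp eq1 n]) blast
    interpret legendre "tn (n - 1)" "tn n" q L by (rule leg)
    have e': "ustar x t - u x t = \<psi> x * poly antideriv t" if "t \<in> {tn (n - 1)<..<tn n}" for t x
      using e[of t x] that unfolding ustar_def by simp
    have "QInt \<Omega> (tn (n - 1)) (tn n) (\<lambda>x t. (ustar x t - u x t) * (\<Sum>j\<le>q - 2. t ^ j * \<phi> j x)) = 0"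
      if "q > 1" "\<forall>j\<le>q - 2. \<phi> j \<in> Vh0 \<Omega> Th p" for \<phi>
    proof (rule QInt_antideriv_orth[OF open_domain bounded_domain \<psi> _ _ e'])
      show "continuous_on UNIV (\<phi> j)" if "j \<le> q - 2" for j
        using Vh0_continuous \<open>\<forall>j\<le>q - 2. \<phi> j \<in> Vh0 \<Omega> Th p\<close> that by blast
    qed (use \<open>q > 1\<close> in auto)
    then show "?interval n"
      using esssup_L2nrm_antideriv_le[where e = "\<lambda>x t. ustar x t - u x t", OF e' d]
        LINT_L2nrm_antideriv_le[where e = "\<lambda>x t. ustar x t - u x t", OF e' d]
      by blast
  qed
qed

end
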